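(* Let $(E,d)$ and $E'$ be Polish spaces, $F:E\times E'\to E$ a measurable map, and $(\zeta_t)_{t\in\mathbb{Z}}$ an $E'$-valued process adapted to a filtration $(\mathcal{F}_t)_{t\in\mathbb{Z}}$. Set $f_t=F(\cdot,\zeta_t)$ and $f_s^t=f_t\circ f_{t-1}\circ\cdots\circ f_s$ for $s\le t$ (with $f_t^{t-1}(x)=x$). Let $p\ge 1$, $L>0$, $\kappa\in(0,1)$ and an integer $m\ge1$ be such that: (A1) there exists $x_0\in E$ with $\sup_{t\in\mathbb{Z}}\mathbb{E}[d^p(f_t(x_0),x_0)]<\infty$; (A2) for every $t\in\mathbb{Z}$, almost surely, for all $(x,y)\in E^2$ simultaneously, $$\mathbb{E}[d^p(f_t(x),f_t(y))\mid\mathcal{F}_{t-1}]\le L^p d^p(x,y)\quad\text{and}\quad \mathbb{E}[d^p(f_t^{t+m-1}(x),f_t^{t+m-1}(y))\mid\mathcal{F}_{t-1}]\le \kappa^p d^p(x,y).$$ Then: 1. For every $(x,t)\in E\times\mathbb{Z}$ there is an $E$-valued random variable $X_t(x)$ with $\sup_{t}\|d(X_t(x),x_0)\|_p<\infty$ and $\sup_t\|d(f_{t-s}^t(x),X_t(x))\|_p=O(\kappa^{s/m})$ as $s\to\infty$; moreover $f_{t-s}^t(x)\to X_t(x)$ almost surely as $s\to\infty$. 2. For $x\ne y$, $\mathbb{P}(X_t(x)\neq X_t(y))=0$; one sets $X_t=X_t(x)$. 3. If $(\zeta_t)$ is stationary, the process $((X_t,\zeta_t))_{t\in\mathbb{Z}}$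 is stationary, and it is ergodic if $(\zeta_t)$ is stationary and ergodic. 4. If $(Y_t)_{t\in\mathbb{Z}}$ is non-anticipative (i.e. $Y_t$ is $\mathcal{F}_t$-measurable), satisfies $Y_t=f_t(Y_{t-1})$ for all $t$ and $\sup_j\mathbb{E}[d^p(Y_j,x_0)]<\infty$, then $Y_t=X_t$ a.s. for all $t$.
   Context: $\|X\|_p=(\mathbb{E}|X|^p)^{1/p}$. The conditional expectations in (A2) are understood through a regular version of the conditional distribution of $(\zeta_t,\dots,\zeta_{t+m-1})$ given $\mathcal{F}_{t-1}$, so that the inequalities hold for all $(x,y)$ outside a single null set. *)

theory Defs
  imports "HOL-Probability.Probability"
begin

fun fiter :: "('a \<Rightarrow> 'b \<Rightarrow> 'a) \<Rightarrow> (nat \<Rightarrow> 'b) \<Rightarrow> nat \<Rightarrow> 'a \<Rightarrow> 'a" where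
  "fiter F z 0 x = x"
| "fiter F z (Suc n) x = F (fiter F z n x) (z n)"

definition reg_cond_distr ::
  "'w measure \<Rightarrow> 'w measure \<Rightarrow> 'v measure \<Rightarrow> ('w \<Rightarrow> 'v) \<Rightarrow> ('w \<Rightarrow> 'v measure) \<Rightarrow> bool" where
  "reg_cond_distr M G N Y K \<longleftrightarrow>
     K \<in> measurable G (prob_algebra N) \<and>
     (\<forall>A\<in>sets G. \<forall>B\<in>sets N.
        measure M ({\<omega>\<in>space M. Y \<omega> \<in> B} \<inter> A) = (LINT \<omega>:A|M. measure (K \<omega>) B))"

definition path_space :: "(int \<Rightarrow> 'c::topological_space) measure" where
  "path_space = PiM UNIV (\<lambda>_. borel)"

definition proc_law :: "'w measure \<Rightarrow> (int \<Rightarrow> 'w \<Rightarrow> 'c::topological_space) \<Rightarrow> (int \<Rightarrow> 'c) measure" where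
  "proc_law M Z = distr M path_space (\<lambda>\<omega> t. Z t \<omega>)"

definition stationary :: "'w measure \<Rightarrow> (int \<Rightarrow> 'w \<Rightarrow> 'c::topological_space) \<Rightarrow> bool" where
  "stationary M Z \<longleftrightarrow> (\<forall>k. proc_law M (\<lambda>t. Z (t + k)) = proc_law M Z)"

definition ergodic :: "'w measure \<Rightarrow> (int \<Rightarrow> 'w \<Rightarrow> 'c::topological_space) \<Rightarrow> bool" where
  "ergodic M Z \<longleftrightarrow>
     (\<forall>A\<in>sets path_space.
        (\<lambda>w t. w (t + 1)) -` A \<inter> space path_space = A \<longrightarrow>
        measure (proc_law M Z) A = 0 \<or> measure (proc_law M Z) A = 1)"

end

theory Submission
  imports Defs
begin

text \<open>Disintegrating along the regular conditional distributions of (A2) turns the one-step and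
  the \<open>m\<close>-step contraction into \<open>L\<^sup>p\<close> estimates for the composed maps applied to random starting
  points that are measurable before the noise is seen:
  \<open>E d\<^sup>p(f\<^sub>r\<^sup>r\<^sup>+\<^sup>n\<^sup>-\<^sup>1(U), f\<^sub>r\<^sup>r\<^sup>+\<^sup>n\<^sup>-\<^sup>1(V)) \<le> C \<rho>\<^sup>n E d\<^sup>p(U, V)\<close> with \<open>\<rho> = \<kappa>\<^sup>p\<^sup>/\<^sup>m\<close>.
  Two consecutive backward iterates \<open>f\<^sub>t\<^sub>-\<^sub>s\<^sup>t(x)\<close> and \<open>f\<^sub>t\<^sub>-\<^sub>s\<^sub>-\<^sub>1\<^sup>t(x)\<close> are the same \<open>s + 1\<close> maps applied
  to \<open>x\<close> and to \<open>f\<^sub>t\<^sub>-\<^sub>s\<^sub>-\<^sub>1(x)\<close>, so by (A1) their \<open>L\<^sup>p\<close> distance is \<open>O(\<rho>\<^sup>s)\<close>. A weighted Hoelder inequality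
  turns geometrically small \<open>L\<^sup>p\<close> increments into almost sure convergence with an \<open>L\<^sup>p\<close> rate.
  The limit \<open>X\<^sub>t(x)\<close> is a measurable function of the noise path seen from time \<open>t\<close>, hence inherits
  stationarity and ergodicity. Another starting point, or a non-anticipative solution with bounded
  moments, stays at \<open>L\<^sup>p\<close> distance \<open>O(\<rho>\<^sup>s)\<close> from the backward iterates; these distances are summable,
  so the limits agree almost surely.\<close>

section \<open>Disintegration along a regular conditional distribution\<close>

lemma emeasure_distr_Pair_rectangle:
  assumes K: "sets K = sets N" and w: "w \<in> space Q" and a: "a \<in> sets Q" and b: "b \<in> sets N"
  shows "emeasure (distr K (Q \<Otimes>\<^sub>M N) (\<lambda>z. (w, z))) (a \<times> b) = indicator a w * emeasure K b"
proof -
  have "emeasure (distr K (Q \<Otimes>\<^sub>M N) (\<lambda>z. (w, z))) (a \<times> b) = emeasure K ((\<lambda>z. (w, z)) -` (a \<times> b) \<inter> space K)"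
    using a b w K
    by (subst emeasure_distr) (auto simp: measurable_def sets_eq_imp_space_eq[OF K] space_pair_measure)
  also have "\<dots> = indicator a w * emeasure K b"
    using sets_eq_imp_space_eq[OF K] sets.sets_into_space[OF b]
    by (auto simp: indicator_def intro!: arg_cong[where f="emeasure K"])
  finally show ?thesis .
qed

lemma emeasure_pair_rectangle_reg_cond_distr:
  assumes M: "prob_space M" and G: "subalgebra M G"
    and K: "reg_cond_distr M G N Y K" and Y: "Y \<in> M \<rightarrow>\<^sub>M N" and W: "W \<in> G \<rightarrow>\<^sub>M Q"
    and a: "a \<in> sets Q" and b: "b \<in> sets N"
  shows "emeasure (distr M (Q \<Otimes>\<^sub>M N) (\<lambda>\<omega>. (W \<omega>, Y \<omega>))) (a \<times> b)
    = (\<integral>\<^sup>+\<omega>. emeasure (distr (K \<omega>) (Q \<Otimes>\<^sub>M N) (\<lambda>z. (W \<omega>, z))) (a \<times> b) \<partial>M)"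
proof -
  interpret prob_space M by fact
  have KG: "K \<in> G \<rightarrow>\<^sub>M prob_algebra N"
    and Keq: "\<And>A B. A \<in> sets G \<Longrightarrow> B \<in> sets N \<Longrightarrow>
       measure M ({\<omega>\<in>space M. Y \<omega> \<in> B} \<inter> A) = (LINT \<omega>:A|M. measure (K \<omega>) B)"
    using K unfolding reg_cond_distr_def by auto
  have KM: "K \<in> M \<rightarrow>\<^sub>M subprob_algebra N"
    using measurable_prob_algebraD[OF measurable_from_subalg[OF G KG]] .
  have WM: "W \<in> M \<rightarrow>\<^sub>M Q" using measurable_from_subalg[OF G W] .
  have K\<omega>: "prob_space (K \<omega>)" "sets (K \<omega>) = sets N" if "\<omega> \<in> space M" for \<omega>
    using measurable_space[OF measurable_from_subalg[OF G KG] that] by (auto simp: space_prob_algebra)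
  have ab: "a \<times> b \<in> sets (Q \<Otimes>\<^sub>M N)" using a b by auto
  define A where "A = W -` a \<inter> space M"
  have AG: "A \<in> sets G"
    unfolding A_def using measurable_sets[OF W a] G by (simp add: subalgebra_def)
  have AM: "A \<in> sets M" unfolding A_def using measurable_sets[OF WM a] by simp
  have Kb: "(\<lambda>\<omega>. measure (K \<omega>) b) \<in> borel_measurable M"
    using measurable_compose[OF KM measurable_emeasure_subprob_algebra[OF b]]
    unfolding measure_def by (intro borel_measurable_enn2real) simp
  have "measure (K \<omega>) b \<le> 1" if "\<omega> \<in> space M" for \<omega>
    using prob_space.prob_le_1[OF K\<omega>(1)[OF that]] .
  then have int: "integrable M (\<lambda>\<omega>. indicator A \<omega> * measure (K \<omega>) b)"
    by (intro integrable_const_bound[where B=1]) (use Kb AM in \<open>auto simp: indicator_def intro!: AE_I2\<close>)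
  have kernel: "emeasure (distr (K \<omega>) (Q \<Otimes>\<^sub>M N) (\<lambda>z. (W \<omega>, z))) (a \<times> b)
      = ennreal (indicator A \<omega> * measure (K \<omega>) b)" if \<omega>: "\<omega> \<in> space M" for \<omega>
    using emeasure_distr_Pair_rectangle[OF K\<omega>(2)[OF \<omega>] measurable_space[OF WM \<omega>] a b] \<omega>
      finite_measure.emeasure_eq_measure[OF prob_space.finite_measure[OF K\<omega>(1)[OF \<omega>]]]
    by (simp add: A_def indicator_def)
  have "emeasure (distr M (Q \<Otimes>\<^sub>M N) (\<lambda>\<omega>. (W \<omega>, Y \<omega>))) (a \<times> b) = emeasure M ({\<omega>\<in>space M. Y \<omega> \<in> b} \<inter> A)"
    using ab WM Y
    by (subst emeasure_distr) (auto simp: A_def intro!: arg_cong[where f="emeasure M"])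
  also have "\<dots> = ennreal (LINT \<omega>:A|M. measure (K \<omega>) b)"
    using Keq[OF AG b] by (simp add: emeasure_eq_measure)
  also have "\<dots> = (\<integral>\<^sup>+\<omega>. ennreal (indicator A \<omega> * measure (K \<omega>) b) \<partial>M)"
    unfolding set_lebesgue_integral_def by (subst nn_integral_eq_integral[OF int]) auto
  also have "\<dots> = (\<integral>\<^sup>+\<omega>. emeasure (distr (K \<omega>) (Q \<Otimes>\<^sub>M N) (\<lambda>z. (W \<omega>, z))) (a \<times> b) \<partial>M)"
    by (intro nn_integral_cong) (simp add: kernel)
  finally show ?thesis .
qed

lemma distr_pair_eq_bind_reg_cond_distr:
  assumes M: "prob_space M" and G: "subalgebra M G"
    and K: "reg_cond_distr M G N Y K" and Y: "Y \<in> M \<rightarrow>\<^sub>M N" and W: "W \<in> G \<rightarrow>\<^sub>M Q"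
  shows "distr M (Q \<Otimes>\<^sub>M N) (\<lambda>\<omega>. (W \<omega>, Y \<omega>)) = M \<bind> (\<lambda>\<omega>. distr (K \<omega>) (Q \<Otimes>\<^sub>M N) (\<lambda>z. (W \<omega>, z)))"
    (is "?\<mu> = M \<bind> ?k")
proof -
  interpret prob_space M by fact
  have KM: "K \<in> M \<rightarrow>\<^sub>M subprob_algebra N"
    using K measurable_from_subalg[OF G] measurable_prob_algebraD unfolding reg_cond_distr_def by blast
  have WM: "W \<in> M \<rightarrow>\<^sub>M Q" using measurable_from_subalg[OF G W] .
  have k: "?k \<in> M \<rightarrow>\<^sub>M subprob_algebra (Q \<Otimes>\<^sub>M N)"
  proof (rule measurable_distr2[OF _ KM])
    show "(\<lambda>(\<omega>, z). (W \<omega>, z)) \<in> M \<Otimes>\<^sub>M N \<rightarrow>\<^sub>M Q \<Otimes>\<^sub>M N" using WM by measurable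
  qed
  let ?E = "{a \<times> b | a b. a \<in> sets Q \<and> b \<in> sets N}"
  show ?thesis
  proof (rule measure_eqI_generator_eq[where E="?E" and \<Omega>="space Q \<times> space N" and A="\<lambda>_. space Q \<times> space N"])
    show "Int_stable ?E" by (rule Int_stable_pair_measure_generator)
    show "?E \<subseteq> Pow (space Q \<times> space N)"
      using sets.sets_into_space[of _ Q] sets.sets_into_space[of _ N] by auto
    show "sets ?\<mu> = sigma_sets (space Q \<times> space N) ?E"
      by (simp add: sets_pair_measure)
    show "sets (M \<bind> ?k) = sigma_sets (space Q \<times> space N) ?E"
      using sets_bind[of M ?k "Q \<Otimes>\<^sub>M N"] not_empty by (simp add: sets_pair_measure)
    show "range (\<lambda>_. space Q \<times> space N) \<subseteq> ?E" by blast
    show "(\<Union>i::nat. space Q \<times> space N) = space Q \<times> space N" by simp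
    show "emeasure ?\<mu> (space Q \<times> space N) \<noteq> \<infinity>" for i :: nat
      using WM Y by (simp add: emeasure_distr)
  next
    fix X assume "X \<in> ?E"
    then obtain a b where X: "X = a \<times> b" and a: "a \<in> sets Q" and b: "b \<in> sets N" by blast
    then show "emeasure ?\<mu> X = emeasure (M \<bind> ?k) X"
      using emeasure_pair_rectangle_reg_cond_distr[OF assms a b] emeasure_bind[OF not_empty k]
      by simp
  qed
qed

lemma nn_integral_reg_cond_distr:
  fixes h :: "'q \<times> 'v \<Rightarrow> ennreal"
  assumes M: "prob_space M" and G: "subalgebra M G"
    and K: "reg_cond_distr M G N Y K" and Y: "Y \<in> M \<rightarrow>\<^sub>M N"
    and W: "W \<in> G \<rightarrow>\<^sub>M Q" and h: "h \<in> borel_measurable (Q \<Otimes>\<^sub>M N)"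
  shows "(\<integral>\<^sup>+\<omega>. h (W \<omega>, Y \<omega>) \<partial>M) = (\<integral>\<^sup>+\<omega>. (\<integral>\<^sup>+z. h (W \<omega>, z) \<partial>K \<omega>) \<partial>M)"
proof -
  have KM: "K \<in> M \<rightarrow>\<^sub>M prob_algebra N"
    using K measurable_from_subalg[OF G] unfolding reg_cond_distr_def by blast
  have WM: "W \<in> M \<rightarrow>\<^sub>M Q" using measurable_from_subalg[OF G W] .
  let ?k = "\<lambda>\<omega>. distr (K \<omega>) (Q \<Otimes>\<^sub>M N) (\<lambda>z. (W \<omega>, z))"
  have k: "?k \<in> M \<rightarrow>\<^sub>M subprob_algebra (Q \<Otimes>\<^sub>M N)"
  proof (rule measurable_distr2[OF _ measurable_prob_algebraD[OF KM]])
    show "(\<lambda>(\<omega>, z). (W \<omega>, z)) \<in> M \<Otimes>\<^sub>M N \<rightarrow>\<^sub>M Q \<Otimes>\<^sub>M N" using WM by measurable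
  qed
  have "(\<integral>\<^sup>+\<omega>. h (W \<omega>, Y \<omega>) \<partial>M) = (\<integral>\<^sup>+x. h x \<partial>distr M (Q \<Otimes>\<^sub>M N) (\<lambda>\<omega>. (W \<omega>, Y \<omega>)))"
    using WM Y h by (subst nn_integral_distr) (simp_all add: measurable_Pair)
  also have "\<dots> = (\<integral>\<^sup>+\<omega>. (\<integral>\<^sup>+x. h x \<partial>?k \<omega>) \<partial>M)"
    unfolding distr_pair_eq_bind_reg_cond_distr[OF assms(1-5)] by (rule nn_integral_bind[OF h k])
  also have "\<dots> = (\<integral>\<^sup>+\<omega>. (\<integral>\<^sup>+z. h (W \<omega>, z) \<partial>K \<omega>) \<partial>M)"
  proof (rule nn_integral_cong)
    fix \<omega> assume \<omega>: "\<omega> \<in> space M"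
    have KN: "sets (K \<omega>) = sets N" using measurable_space[OF KM \<omega>] by (simp add: space_prob_algebra)
    have "(\<lambda>z. (W \<omega>, z)) \<in> K \<omega> \<rightarrow>\<^sub>M Q \<Otimes>\<^sub>M N"
      using measurable_space[OF WM \<omega>] by (simp add: measurable_cong_sets[OF KN refl] measurable_Pair2')
    then show "(\<integral>\<^sup>+x. h x \<partial>?k \<omega>) = (\<integral>\<^sup>+z. h (W \<omega>, z) \<partial>K \<omega>)"
      by (simp add: nn_integral_distr h)
  qed
  finally show ?thesis .
qed

section \<open>Sequences with geometrically small increments in \<open>L\<^sup>p\<close>\<close>

lemma powr_sum_le_weighted:
  fixes D w :: "'i \<Rightarrow> real"
  assumes S: "finite S" and p: "p \<ge> 1"
    and w: "\<And>k. k \<in> S \<Longrightarrow> w k > 0" and D: "\<And>k. k \<in> S \<Longrightarrow> D k \<ge> 0"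
  shows "(\<Sum>k\<in>S. D k) powr p \<le> (\<Sum>k\<in>S. w k) powr (p - 1) * (\<Sum>k\<in>S. D k powr p / w k powr (p - 1))"
proof -
  define S' where "S' = {k\<in>S. D k > 0}"
  have S': "finite S'" "S' \<subseteq> S" using S unfolding S'_def by auto
  have sumD: "(\<Sum>k\<in>S. D k) = (\<Sum>k\<in>S'. D k)"
    by (rule sum.mono_neutral_right[OF S S'(2)]) (use D in \<open>force simp: S'_def\<close>)
  have sumR: "(\<Sum>k\<in>S. D k powr p / w k powr (p - 1)) = (\<Sum>k\<in>S'. D k powr p / w k powr (p - 1))"
    by (rule sum.mono_neutral_right[OF S S'(2)]) (use D in \<open>force simp: S'_def\<close>)
  show ?thesis
  proof (cases "S' = {}")
    case True
    then show ?thesis using sumD sumR by (simp add: sum_nonneg)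
  next
    case False
    define W where "W = (\<Sum>k\<in>S'. w k)"
    have W: "W > 0" unfolding W_def using False S' w by (intro sum_pos) auto
    \<comment> \<open>Jensen for the convex function \<open>t powr p\<close> with weights \<open>w k / W\<close> at the points \<open>W * D k / w k\<close>\<close>
    have "(\<Sum>k\<in>S'. (w k / W) *\<^sub>R (W * D k / w k)) powr p \<le> (\<Sum>k\<in>S'. (w k / W) * (W * D k / w k) powr p)"
    proof (rule convex_on_sum[OF S'(1) False powr_convex[OF p]])
      show "(\<Sum>k\<in>S'. w k / W) = 1" using W by (simp add: W_def sum_divide_distrib[symmetric])
    qed (use W w S'(2) in \<open>auto simp: S'_def intro!: less_imp_le\<close>)
    also have "(\<Sum>k\<in>S'. (w k / W) *\<^sub>R (W * D k / w k)) = (\<Sum>k\<in>S'. D k)"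
      using W by (intro sum.cong refl) (use w S'(2) in force)
    also have "(\<Sum>k\<in>S'. (w k / W) * (W * D k / w k) powr p)
        = W powr (p - 1) * (\<Sum>k\<in>S'. D k powr p / w k powr (p - 1))"
      unfolding sum_distrib_left
    proof (rule sum.cong)
      fix k assume "k \<in> S'"
      then have "w k > 0" "D k > 0" using w S'(2) unfolding S'_def by auto
      then show "(w k / W) * (W * D k / w k) powr p = W powr (p - 1) * (D k powr p / w k powr (p - 1))"
        using W by (simp add: powr_diff powr_mult powr_divide field_simps)
    qed simp
    also have "\<dots> \<le> (\<Sum>k\<in>S. w k) powr (p - 1) * (\<Sum>k\<in>S'. D k powr p / w k powr (p - 1))"
      using W p S S' w unfolding W_def
      by (intro mult_right_mono powr_mono2 sum_mono2 sum_nonneg) (auto intro: less_imp_le)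
    finally show ?thesis using sumD sumR by simp
  qed
qed

lemma powr_add3_le:
  fixes a b c p :: real
  assumes "p \<ge> 1" "a \<ge> 0" "b \<ge> 0" "c \<ge> 0"
  shows "(a + b + c) powr p \<le> 3 powr (p - 1) * (a powr p + b powr p + c powr p)"
  using powr_sum_le_weighted[of "{0::nat, 1, 2}" p "\<lambda>_. 1" "\<lambda>k. if k = 0 then a else if k = 1 then b else c"] assms
  by (simp add: add.assoc)

lemma dist_le_sum_dist:
  fixes a :: "nat \<Rightarrow> 'a::metric_space"
  shows "dist (a s) (a (s + n)) \<le> (\<Sum>k<n. dist (a (s + k)) (a (Suc (s + k))))"
proof (induction n)
  case (Suc n)
  have "dist (a s) (a (s + Suc n)) \<le> dist (a s) (a (s + n)) + dist (a (s + n)) (a (Suc (s + n)))"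
    using dist_triangle by simp
  then show ?case using Suc by simp
qed simp

lemma powr_sum_le_geometric_weighted:
  fixes D :: "nat \<Rightarrow> real"
  assumes p: "p \<ge> 1" and \<sigma>: "0 < \<sigma>" "\<sigma> < 1" and D: "\<And>k. D k \<ge> 0"
  shows "(\<Sum>k<n. D (s + k)) powr p
    \<le> (\<sigma> ^ s / (1 - \<sigma>)) powr (p - 1) * (\<Sum>k<n. D (s + k) powr p / (\<sigma> powr (p - 1)) ^ (s + k))"
proof -
  have "(\<Sum>k<n. D (s + k)) powr p
      \<le> (\<Sum>k<n. \<sigma> ^ (s + k)) powr (p - 1) * (\<Sum>k<n. D (s + k) powr p / (\<sigma> ^ (s + k)) powr (p - 1))"
    by (rule powr_sum_le_weighted) (use \<sigma> D p in auto)
  moreover have "(\<Sum>k<n. \<sigma> ^ (s + k)) \<le> \<sigma> ^ s / (1 - \<sigma>)"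
  proof -
    have "(\<Sum>k<n. \<sigma> ^ (s + k)) = \<sigma> ^ s * (\<Sum>k<n. \<sigma> ^ k)"
      by (simp add: power_add sum_distrib_left)
    also have "\<dots> \<le> \<sigma> ^ s / (1 - \<sigma>)"
      using \<sigma> by (simp add: sum_gp_strict field_simps)
    finally show ?thesis .
  qed
  moreover have "(\<sigma> ^ (s + k)) powr (p - 1) = (\<sigma> powr (p - 1)) ^ (s + k)" for k
    using \<sigma> by (simp add: powr_realpow[symmetric] powr_powr mult.commute)
  ultimately show ?thesis
    using p \<sigma> D by (auto elim!: order.trans intro!: mult_right_mono powr_mono2 sum_nonneg)
qed

lemma dist_powr_le_weighted_increments:
  fixes a :: "nat \<Rightarrow> 'a::metric_space"
  assumes p: "p \<ge> 1" and \<sigma>: "0 < \<sigma>" "\<sigma> < 1"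
  shows "ennreal (dist (a s) (a (s + n)) powr p)
    \<le> ennreal ((\<sigma> ^ s / (1 - \<sigma>)) powr (p - 1)) *
      (\<Sum>k. ennreal (dist (a (s + k)) (a (Suc (s + k))) powr p / (\<sigma> powr (p - 1)) ^ (s + k)))"
proof -
  let ?c = "(\<sigma> ^ s / (1 - \<sigma>)) powr (p - 1)"
  let ?g = "\<lambda>k. dist (a (s + k)) (a (Suc (s + k))) powr p / (\<sigma> powr (p - 1)) ^ (s + k)"
  have "dist (a s) (a (s + n)) powr p \<le> (\<Sum>k<n. dist (a (s + k)) (a (Suc (s + k)))) powr p"
    using p dist_le_sum_dist[of a s n] by (intro powr_mono2) auto
  also have "\<dots> \<le> ?c * (\<Sum>k<n. ?g k)"
    by (rule powr_sum_le_geometric_weighted) (use p \<sigma> in auto)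
  finally have "ennreal (dist (a s) (a (s + n)) powr p) \<le> ennreal (?c * (\<Sum>k<n. ?g k))"
    by (rule ennreal_leI)
  also have "\<dots> = ennreal ?c * (\<Sum>k<n. ennreal (?g k))"
    using \<sigma> by (simp add: ennreal_mult sum_nonneg)
  also have "\<dots> \<le> ennreal ?c * (\<Sum>k. ennreal (?g k))"
    by (intro mult_left_mono sum_le_suminf) auto
  finally show ?thesis .
qed

lemma Cauchy_of_summable_weighted_increments:
  fixes a :: "nat \<Rightarrow> 'a::metric_space"
  assumes p: "p \<ge> 1" and \<sigma>: "0 < \<sigma>" "\<sigma> < 1"
    and g: "summable (\<lambda>k. dist (a k) (a (Suc k)) powr p / (\<sigma> powr (p - 1)) ^ k)"
  shows "Cauchy a"
  unfolding Cauchy_altdef2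
proof (intro allI impI)
  fix e :: real assume e: "e > 0"
  let ?g = "\<lambda>k. dist (a k) (a (Suc k)) powr p / (\<sigma> powr (p - 1)) ^ k"
  define c where "c = (1 / (1 - \<sigma>)) powr (p - 1)"
  have c: "c > 0" using \<sigma> by (simp add: c_def)
  obtain N where N: "(\<Sum>i. ?g (i + N)) < e powr p / c"
  proof -
    obtain N where "\<forall>n\<ge>N. norm (\<Sum>i. ?g (i + n)) < e powr p / c"
      using suminf_exist_split[OF _ g, of "e powr p / c"] e c by auto
    then have "\<bar>\<Sum>i. ?g (i + N)\<bar> < e powr p / c" by auto
    then show thesis using that abs_ge_self le_less_trans by blast
  qed
  have "dist (a N) (a (N + n)) < e" for n
  proof (rule ccontr)
    let ?S = "\<Sum>k<n. dist (a (N + k)) (a (Suc (N + k)))"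
    assume "\<not> ?thesis"
    then have "e \<le> ?S" using dist_le_sum_dist[of a N n] by linarith
    then have "e powr p \<le> ?S powr p" using e p by (intro powr_mono2) auto
    also have "\<dots> \<le> (\<sigma> ^ N / (1 - \<sigma>)) powr (p - 1) * (\<Sum>k<n. ?g (N + k))"
      by (rule powr_sum_le_geometric_weighted) (use p \<sigma> in auto)
    also have "\<dots> \<le> c * (\<Sum>i. ?g (i + N))"
    proof (rule mult_mono)
      show "(\<sigma> ^ N / (1 - \<sigma>)) powr (p - 1) \<le> c"
        unfolding c_def using \<sigma> p by (intro powr_mono2 divide_right_mono) (auto simp: power_le_one)
      show "(\<Sum>k<n. ?g (N + k)) \<le> (\<Sum>i. ?g (i + N))"
        using sum_le_suminf[OF summable_ignore_initial_segment[OF g, of N], of "{..<n}"] \<sigma>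
        by (simp add: add.commute)
    qed (use c \<sigma> in \<open>auto intro!: sum_nonneg\<close>)
    also have "\<dots> < e powr p" using N c by (simp add: field_simps)
    finally show False by simp
  qed
  then show "\<exists>N. \<forall>n\<ge>N. dist (a n) (a N) < e" by (metis le_add_diff_inverse dist_commute)
qed

text \<open>Hoelder's inequality with the weights \<open>\<sigma>\<^sup>k\<close>, \<open>\<sigma> = \<rho>\<^sup>1\<^sup>/\<^sup>(\<^sup>2\<^sup>p\<^sup>)\<close>, bounds \<open>E d\<^sup>p(a\<^sub>s, lim a)\<close> by
  \<open>(\<sigma>\<^sup>s/(1-\<sigma>))\<^sup>p\<^sup>-\<^sup>1 \<Sum>\<^sub>k\<^sub>\<ge>\<^sub>s E d\<^sup>p(a\<^sub>k, a\<^sub>k\<^sub>+\<^sub>1) / \<sigma>\<^sup>k\<^sup>(\<^sup>p\<^sup>-\<^sup>1\<^sup>)\<close>; summing the geometric series with ratio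
  \<open>\<tau> = \<rho> / \<sigma>\<^sup>p\<^sup>-\<^sup>1 = \<rho>\<^sup>(\<^sup>p\<^sup>+\<^sup>1\<^sup>)\<^sup>/\<^sup>(\<^sup>2\<^sup>p\<^sup>)\<close> leaves this constant in front of \<open>B \<rho>\<^sup>s\<close>.\<close>
definition geometric_tail_const :: "real \<Rightarrow> real \<Rightarrow> real" where
  "geometric_tail_const \<rho> p =
     1 / ((1 - \<rho> powr (1 / (2 * p))) powr (p - 1) * (1 - \<rho> powr ((p + 1) / (2 * p))))"

lemma geometric_tail_weights:
  fixes \<rho> p :: real
  assumes p: "p \<ge> 1" and \<rho>: "0 < \<rho>" "\<rho> < 1"
  defines "\<sigma> \<equiv> \<rho> powr (1 / (2 * p))"
  shows "0 < \<sigma>" "\<sigma> < 1" "\<rho> < \<sigma> powr (p - 1)"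
    and "\<rho> / \<sigma> powr (p - 1) = \<rho> powr ((p + 1) / (2 * p))" "\<rho> powr ((p + 1) / (2 * p)) < 1"
    and "geometric_tail_const \<rho> p > 0"
proof -
  have \<sigma>q: "\<sigma> powr (p - 1) = \<rho> powr ((p - 1) / (2 * p))"
    unfolding \<sigma>_def by (simp add: powr_powr)
  have less1: "\<rho> powr e < 1" if "e > 0" for e
    using powr_less_mono2[OF that, of \<rho> 1] \<rho> by simp
  show "0 < \<sigma>" using \<rho> by (simp add: \<sigma>_def)
  show \<sigma>1: "\<sigma> < 1" unfolding \<sigma>_def using p by (intro less1) simp
  have "\<rho> powr 1 < \<rho> powr ((p - 1) / (2 * p))"
    using p \<rho> by (intro powr_less_mono') (auto simp: field_simps)
  then show "\<rho> < \<sigma> powr (p - 1)" using \<rho> \<sigma>q by simp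
  have "\<rho> / \<sigma> powr (p - 1) = \<rho> powr (1 - (p - 1) / (2 * p))"
    unfolding \<sigma>q using \<rho> by (simp add: powr_diff)
  also have "1 - (p - 1) / (2 * p) = (p + 1) / (2 * p)"
    using p by (simp add: field_simps)
  finally show "\<rho> / \<sigma> powr (p - 1) = \<rho> powr ((p + 1) / (2 * p))" .
  show \<tau>1: "\<rho> powr ((p + 1) / (2 * p)) < 1" using p by (intro less1) simp
  show "geometric_tail_const \<rho> p > 0"
    using \<sigma>1 \<tau>1 by (simp add: geometric_tail_const_def \<sigma>_def)
qed

context
  fixes M :: "'w measure" and a :: "nat \<Rightarrow> 'w \<Rightarrow> 'a::polish_space" and p \<rho> B :: real
  assumes meas[measurable]: "\<And>s. a s \<in> borel_measurable M"
    and p: "p \<ge> 1" and \<rho>: "0 < \<rho>" "\<rho> < 1" and B: "B \<ge> 0"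
    and increments: "\<And>s. (\<integral>\<^sup>+\<omega>. ennreal (dist (a s \<omega>) (a (Suc s) \<omega>) powr p) \<partial>M) \<le> ennreal (B * \<rho> ^ s)"
begin

lemma nn_integral_weighted_increments_le:
  assumes q: "\<rho> < q"
  shows "(\<integral>\<^sup>+\<omega>. (\<Sum>k. ennreal (dist (a (s + k) \<omega>) (a (Suc (s + k)) \<omega>) powr p / q ^ (s + k))) \<partial>M)
    \<le> ennreal (B * (\<rho> / q) ^ s / (1 - \<rho> / q))"
proof -
  let ?D = "\<lambda>k \<omega>. dist (a k \<omega>) (a (Suc k) \<omega>) powr p"
  define \<tau> where "\<tau> = \<rho> / q"
  have q0: "q > 0" and \<tau>: "0 < \<tau>" "\<tau> < 1" using q \<rho> by (auto simp: \<tau>_def)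
  have "(\<integral>\<^sup>+\<omega>. (\<Sum>k. ennreal (?D (s + k) \<omega> / q ^ (s + k))) \<partial>M)
      = (\<Sum>k. \<integral>\<^sup>+\<omega>. ennreal (?D (s + k) \<omega>) * ennreal (1 / q ^ (s + k)) \<partial>M)"
    using q0 by (subst nn_integral_suminf) (auto simp: ennreal_mult'[symmetric])
  also have "\<dots> = (\<Sum>k. (\<integral>\<^sup>+\<omega>. ennreal (?D (s + k) \<omega>) \<partial>M) * ennreal (1 / q ^ (s + k)))"
    by (subst nn_integral_multc) auto
  also have "\<dots> \<le> (\<Sum>k. ennreal (B * \<rho> ^ (s + k)) * ennreal (1 / q ^ (s + k)))"
    by (intro suminf_le mult_right_mono increments) auto
  also have "\<dots> = (\<Sum>k. ennreal (B * \<tau> ^ (s + k)))"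
    using B q0 \<rho> by (simp add: ennreal_mult[symmetric] \<tau>_def power_divide)
  also have "\<dots> = ennreal (B * \<tau> ^ s / (1 - \<tau>))"
  proof (rule suminf_ennreal_eq)
    have "(\<lambda>k. (B * \<tau> ^ s) * \<tau> ^ k) sums ((B * \<tau> ^ s) * (1 / (1 - \<tau>)))"
      by (intro sums_mult geometric_sums) (use \<tau> in auto)
    then show "(\<lambda>k. B * \<tau> ^ (s + k)) sums (B * \<tau> ^ s / (1 - \<tau>))"
      by (simp add: power_add mult.assoc)
  qed (use B \<tau> in auto)
  finally show ?thesis unfolding \<tau>_def .
qed

lemma AE_convergent_of_geometric_increments: "AE \<omega> in M. convergent (\<lambda>s. a s \<omega>)"
proof -
  define \<sigma> where "\<sigma> = \<rho> powr (1 / (2 * p))"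
  note weights = geometric_tail_weights[OF p \<rho>, folded \<sigma>_def]
  let ?g = "\<lambda>\<omega> k. dist (a k \<omega>) (a (Suc k) \<omega>) powr p / (\<sigma> powr (p - 1)) ^ k"
  have "(\<integral>\<^sup>+\<omega>. (\<Sum>k. ennreal (?g \<omega> k)) \<partial>M) \<noteq> \<infinity>"
    using nn_integral_weighted_increments_le[OF weights(3), of 0] by (auto simp: top_unique)
  then have "AE \<omega> in M. (\<Sum>k. ennreal (?g \<omega> k)) \<noteq> \<infinity>"
    by (intro nn_integral_PInf_AE) auto
  then show ?thesis
  proof eventually_elim
    case (elim \<omega>)
    have "summable (?g \<omega>)" by (rule summable_suminf_not_top) (use elim weights in auto)
    then have "Cauchy (\<lambda>s. a s \<omega>)" by (rule Cauchy_of_summable_weighted_increments[OF p weights(1,2)])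
    then show ?case by (simp add: Cauchy_convergent_iff)
  qed
qed

lemma nn_integral_dist_lim_le_geometric:
  assumes lim: "AE \<omega> in M. (\<lambda>s. a s \<omega>) \<longlonglongrightarrow> X \<omega>"
  shows "(\<integral>\<^sup>+\<omega>. ennreal (dist (a s \<omega>) (X \<omega>) powr p) \<partial>M) \<le> ennreal (geometric_tail_const \<rho> p * B * \<rho> ^ s)"
proof -
  define \<sigma> where "\<sigma> = \<rho> powr (1 / (2 * p))"
  define q where "q = \<sigma> powr (p - 1)"
  define c where "c = (\<sigma> ^ s / (1 - \<sigma>)) powr (p - 1)"
  note weights = geometric_tail_weights[OF p \<rho>, folded \<sigma>_def, folded q_def]
  let ?T = "\<lambda>\<omega>. \<Sum>k. ennreal (dist (a (s + k) \<omega>) (a (Suc (s + k)) \<omega>) powr p / q ^ (s + k))"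
  have "(\<integral>\<^sup>+\<omega>. ennreal (dist (a s \<omega>) (X \<omega>) powr p) \<partial>M) \<le> (\<integral>\<^sup>+\<omega>. ennreal c * ?T \<omega> \<partial>M)"
  proof (rule nn_integral_mono_AE)
    show "AE \<omega> in M. ennreal (dist (a s \<omega>) (X \<omega>) powr p) \<le> ennreal c * ?T \<omega>"
      using lim
    proof eventually_elim
      case (elim \<omega>)
      have "(\<lambda>n. a (s + n) \<omega>) \<longlonglongrightarrow> X \<omega>"
        using LIMSEQ_ignore_initial_segment[OF elim, of s] by (simp add: add.commute)
      then have lim_n: "(\<lambda>n. ennreal (dist (a s \<omega>) (a (s + n) \<omega>) powr p))
          \<longlonglongrightarrow> ennreal (dist (a s \<omega>) (X \<omega>) powr p)"
        using p by (intro tendsto_ennrealI tendsto_powr' tendsto_dist tendsto_const) auto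
      have bound: "ennreal (dist (a s \<omega>) (a (s + n) \<omega>) powr p) \<le> ennreal c * ?T \<omega>" for n
        unfolding c_def q_def by (rule dist_powr_le_weighted_increments[OF p weights(1,2)])
      show ?case using bound by (intro LIMSEQ_le_const2[OF lim_n]) auto
    qed
  qed
  also have "\<dots> = ennreal c * (\<integral>\<^sup>+\<omega>. ?T \<omega> \<partial>M)" by (rule nn_integral_cmult) auto
  also have "\<dots> \<le> ennreal c * ennreal (B * (\<rho> / q) ^ s / (1 - \<rho> / q))"
    by (intro mult_left_mono nn_integral_weighted_increments_le weights) auto
  also have "\<dots> = ennreal (geometric_tail_const \<rho> p * B * \<rho> ^ s)"
  proof -
    have c: "c = q ^ s / (1 - \<sigma>) powr (p - 1)"
      unfolding c_def q_def using weights
      by (simp add: powr_divide powr_realpow[symmetric] powr_powr mult.commute)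
    have "(1 - \<sigma>) powr (p - 1) > 0" "q > 0" using weights \<rho> by auto
    then have "c * (B * (\<rho> / q) ^ s / (1 - \<rho> / q)) = B * \<rho> ^ s / ((1 - \<sigma>) powr (p - 1) * (1 - \<rho> / q))"
      unfolding c by (simp add: power_divide)
    also have "\<dots> = geometric_tail_const \<rho> p * B * \<rho> ^ s"
      unfolding geometric_tail_const_def \<sigma>_def[symmetric] weights(4)[symmetric] by simp
    finally have "c * (B * (\<rho> / q) ^ s / (1 - \<rho> / q)) = geometric_tail_const \<rho> p * B * \<rho> ^ s" .
    then show ?thesis using weights B by (simp add: ennreal_mult[symmetric] c_def)
  qed
  finally show ?thesis .
qed

end

lemma nn_integral_dist_powr_triangle3:
  fixes f g h k :: "'w \<Rightarrow> 'a::{metric_space, second_countable_topology}"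
  assumes p: "p \<ge> 1" and [measurable]: "f \<in> borel_measurable M" "g \<in> borel_measurable M"
    "h \<in> borel_measurable M" "k \<in> borel_measurable M"
  shows "(\<integral>\<^sup>+\<omega>. ennreal (dist (f \<omega>) (k \<omega>) powr p) \<partial>M)
    \<le> ennreal (3 powr (p - 1)) * ((\<integral>\<^sup>+\<omega>. ennreal (dist (f \<omega>) (g \<omega>) powr p) \<partial>M)
        + (\<integral>\<^sup>+\<omega>. ennreal (dist (g \<omega>) (h \<omega>) powr p) \<partial>M) + (\<integral>\<^sup>+\<omega>. ennreal (dist (h \<omega>) (k \<omega>) powr p) \<partial>M))"
proof -
  have "ennreal (dist (f \<omega>) (k \<omega>) powr p) \<le> ennreal (3 powr (p - 1))
      * (ennreal (dist (f \<omega>) (g \<omega>) powr p) + ennreal (dist (g \<omega>) (h \<omega>) powr p) + ennreal (dist (h \<omega>) (k \<omega>) powr p))"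
    for \<omega>
  proof -
    have "dist (f \<omega>) (k \<omega>) \<le> dist (f \<omega>) (g \<omega>) + dist (g \<omega>) (h \<omega>) + dist (h \<omega>) (k \<omega>)"
      using dist_triangle[of "f \<omega>" "k \<omega>" "g \<omega>"] dist_triangle[of "g \<omega>" "k \<omega>" "h \<omega>"] by linarith
    then have "dist (f \<omega>) (k \<omega>) powr p \<le> (dist (f \<omega>) (g \<omega>) + dist (g \<omega>) (h \<omega>) + dist (h \<omega>) (k \<omega>)) powr p"
      using p by (intro powr_mono2) auto
    also have "\<dots> \<le> 3 powr (p - 1) * (dist (f \<omega>) (g \<omega>) powr p + dist (g \<omega>) (h \<omega>) powr p + dist (h \<omega>) (k \<omega>) powr p)"
      by (rule powr_add3_le) (use p in auto)
    finally have "ennreal (dist (f \<omega>) (k \<omega>) powr p) \<le> ennreal (3 powr (p - 1)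
        * (dist (f \<omega>) (g \<omega>) powr p + dist (g \<omega>) (h \<omega>) powr p + dist (h \<omega>) (k \<omega>) powr p))"
      by (rule ennreal_leI)
    then show ?thesis by (simp add: ennreal_mult)
  qed
  then have "(\<integral>\<^sup>+\<omega>. ennreal (dist (f \<omega>) (k \<omega>) powr p) \<partial>M) \<le> (\<integral>\<^sup>+\<omega>. ennreal (3 powr (p - 1))
      * (ennreal (dist (f \<omega>) (g \<omega>) powr p) + ennreal (dist (g \<omega>) (h \<omega>) powr p) + ennreal (dist (h \<omega>) (k \<omega>) powr p)) \<partial>M)"
    by (rule nn_integral_mono)
  also have "\<dots> = ennreal (3 powr (p - 1)) * ((\<integral>\<^sup>+\<omega>. ennreal (dist (f \<omega>) (g \<omega>) powr p) \<partial>M)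
        + (\<integral>\<^sup>+\<omega>. ennreal (dist (g \<omega>) (h \<omega>) powr p) \<partial>M) + (\<integral>\<^sup>+\<omega>. ennreal (dist (h \<omega>) (k \<omega>) powr p) \<partial>M))"
    by (subst nn_integral_cmult) (simp_all add: nn_integral_add)
  finally show ?thesis .
qed

lemma AE_tendsto_dist_of_geometric_moments:
  fixes a b :: "nat \<Rightarrow> 'w \<Rightarrow> 'a::metric_space"
  assumes [measurable]: "\<And>s. (\<lambda>\<omega>. dist (a s \<omega>) (b s \<omega>)) \<in> borel_measurable M"
    and p: "p > 0" and \<rho>: "0 < \<rho>" "\<rho> < 1" and B: "B \<ge> 0"
    and bound: "\<And>s. (\<integral>\<^sup>+\<omega>. ennreal (dist (a s \<omega>) (b s \<omega>) powr p) \<partial>M) \<le> ennreal (B * \<rho> ^ s)"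
  shows "AE \<omega> in M. (\<lambda>s. dist (a s \<omega>) (b s \<omega>)) \<longlonglongrightarrow> 0"
proof -
  let ?G = "\<lambda>\<omega>. \<Sum>s. ennreal (dist (a s \<omega>) (b s \<omega>) powr p)"
  have "(\<integral>\<^sup>+\<omega>. ?G \<omega> \<partial>M) = (\<Sum>s. \<integral>\<^sup>+\<omega>. ennreal (dist (a s \<omega>) (b s \<omega>) powr p) \<partial>M)"
    by (rule nn_integral_suminf) measurable
  also have "\<dots> \<le> (\<Sum>s. ennreal (B * \<rho> ^ s))" by (intro suminf_le bound) auto
  also have "\<dots> = ennreal (B * (1 / (1 - \<rho>)))"
    by (rule suminf_ennreal_eq) (use B \<rho> sums_mult[OF geometric_sums[of \<rho>], of B] in auto)
  finally have "AE \<omega> in M. ?G \<omega> \<noteq> \<infinity>"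
    by (intro nn_integral_PInf_AE) (auto simp: top_unique)
  then show ?thesis
  proof eventually_elim
    case (elim \<omega>)
    then have "summable (\<lambda>s. dist (a s \<omega>) (b s \<omega>) powr p)"
      by (intro summable_suminf_not_top) auto
    then have "(\<lambda>s. (dist (a s \<omega>) (b s \<omega>) powr p) powr (1 / p)) \<longlonglongrightarrow> 0 powr (1 / p)"
      using p by (intro tendsto_powr' summable_LIMSEQ_zero tendsto_const) auto
    then show ?case using p by (simp add: powr_powr)
  qed
qed

lemma pred_convergent:
  fixes f :: "nat \<Rightarrow> 'w \<Rightarrow> 'a::polish_space"
  assumes "\<And>s. f s \<in> borel_measurable N"
  shows "Measurable.pred N (\<lambda>w. convergent (\<lambda>s. f s w))"
  using sets_Collect_Cauchy[of f N] assms by (simp add: pred_def Cauchy_convergent_iff)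

section \<open>Path space, stationarity and ergodicity\<close>

lemma space_path_space[simp]: "space (path_space :: (int \<Rightarrow> 'c::topological_space) measure) = UNIV"
  unfolding path_space_def by (simp add: space_PiM)

lemma measurable_path_space_iff:
  "f \<in> N \<rightarrow>\<^sub>M (path_space :: (int \<Rightarrow> 'c::topological_space) measure)
    \<longleftrightarrow> (\<forall>t. (\<lambda>\<omega>. f \<omega> t) \<in> N \<rightarrow>\<^sub>M borel)"
  unfolding path_space_def by (auto simp: measurable_PiM_single' intro: measurable_PiM_single')

lemma measurable_path_space_component[measurable]:
  "(\<lambda>w. w t) \<in> (path_space :: (int \<Rightarrow> 'c::topological_space) measure) \<rightarrow>\<^sub>M borel"
  unfolding path_space_def by simp

lemma measurable_path_space_shift:
  "(\<lambda>w j. w (k + j)) \<in> (path_space :: (int \<Rightarrow> 'c::topological_space) measure) \<rightarrow>\<^sub>M path_space"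
  by (simp add: measurable_path_space_iff)

lemma proc_law_comp:
  fixes Z :: "int \<Rightarrow> 'w \<Rightarrow> 'c::topological_space" and \<Psi> :: "(int \<Rightarrow> 'c) \<Rightarrow> int \<Rightarrow> 'd::topological_space"
  assumes "\<And>t. Z t \<in> M \<rightarrow>\<^sub>M borel" and \<Psi>: "\<Psi> \<in> path_space \<rightarrow>\<^sub>M path_space"
  shows "proc_law M (\<lambda>t \<omega>. \<Psi> (\<lambda>k. Z k \<omega>) t) = distr (proc_law M Z) path_space \<Psi>"
  unfolding proc_law_def using assms
  by (subst distr_distr) (auto simp: measurable_path_space_iff comp_def)

context
  fixes \<Psi> :: "(int \<Rightarrow> 'c::topological_space) \<Rightarrow> int \<Rightarrow> 'd::topological_space"
  assumes \<Psi>: "\<Psi> \<in> path_space \<rightarrow>\<^sub>M path_space"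
    and shift_equivariant: "\<And>w k t. \<Psi> (\<lambda>j. w (j + k)) t = \<Psi> w (t + k)"
begin

lemma stationary_comp:
  assumes Z: "\<And>t. Z t \<in> M \<rightarrow>\<^sub>M borel" and "stationary M Z"
  shows "stationary M (\<lambda>t \<omega>. \<Psi> (\<lambda>k. Z k \<omega>) t)"
  unfolding stationary_def
proof
  fix k
  have "proc_law M (\<lambda>t \<omega>. \<Psi> (\<lambda>j. Z j \<omega>) (t + k)) = proc_law M (\<lambda>t \<omega>. \<Psi> (\<lambda>j. Z (j + k) \<omega>) t)"
    by (intro arg_cong[where f="proc_law M"] ext) (simp add: shift_equivariant[symmetric])
  also have "\<dots> = distr (proc_law M (\<lambda>t. Z (t + k))) path_space \<Psi>"
    using Z by (intro proc_law_comp \<Psi>)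
  also have "\<dots> = proc_law M (\<lambda>t \<omega>. \<Psi> (\<lambda>j. Z j \<omega>) t)"
    using \<open>stationary M Z\<close> Z by (simp add: stationary_def proc_law_comp[OF _ \<Psi>])
  finally show "proc_law M (\<lambda>t. (\<lambda>t \<omega>. \<Psi> (\<lambda>j. Z j \<omega>) t) (t + k)) = proc_law M (\<lambda>t \<omega>. \<Psi> (\<lambda>j. Z j \<omega>) t)" .
qed

text \<open>Unlike stationarity, ergodicity in the sense of \<open>ergodic\<close> transfers without any stationarity
  assumption, since it only concerns shift-invariant sets.\<close>
lemma ergodic_comp:
  assumes Z: "\<And>t. Z t \<in> M \<rightarrow>\<^sub>M borel" and "ergodic M Z"
  shows "ergodic M (\<lambda>t \<omega>. \<Psi> (\<lambda>k. Z k \<omega>) t)"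
  unfolding ergodic_def
proof (intro ballI impI)
  fix A :: "(int \<Rightarrow> 'd) set"
  assume A: "A \<in> sets path_space" and inv: "(\<lambda>w t. w (t + 1)) -` A \<inter> space path_space = A"
  define A' where "A' = \<Psi> -` A"
  have A': "A' \<in> sets path_space" using measurable_sets[OF \<Psi> A] by (simp add: A'_def)
  have "(\<lambda>w t. w (t + 1)) -` A' \<inter> space path_space = A'"
    using inv by (auto simp: A'_def shift_equivariant[of _ 1, abs_def] set_eq_iff)
  then have "measure (proc_law M Z) A' = 0 \<or> measure (proc_law M Z) A' = 1"
    using \<open>ergodic M Z\<close> A' unfolding ergodic_def by blast
  moreover have "measure (proc_law M (\<lambda>t \<omega>. \<Psi> (\<lambda>k. Z k \<omega>) t)) A = measure (proc_law M Z) A'"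
    using A \<Psi> unfolding proc_law_comp[OF Z \<Psi>] A'_def
    by (subst measure_distr) (auto simp: proc_law_def)
  ultimately show "measure (proc_law M (\<lambda>t \<omega>. \<Psi> (\<lambda>k. Z k \<omega>) t)) A = 0 \<or>
      measure (proc_law M (\<lambda>t \<omega>. \<Psi> (\<lambda>k. Z k \<omega>) t)) A = 1" by simp
qed

end

section \<open>Iterated random maps\<close>

lemma fiter_add: "fiter F z (a + b) x = fiter F (\<lambda>i. z (a + i)) b (fiter F z a x)"
  by (induct b) (auto simp: add.commute[of a] add_Suc_right)

lemma fiter_cong: "(\<And>i. i < n \<Longrightarrow> z i = z' i) \<Longrightarrow> fiter F z n x = fiter F z' n x"
  by (induct n) auto

lemma measurable_fiter:
  fixes F :: "'a::polish_space \<Rightarrow> 'b::polish_space \<Rightarrow> 'a"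
  assumes F: "(\<lambda>(x, z). F x z) \<in> borel \<Otimes>\<^sub>M borel \<rightarrow>\<^sub>M borel"
    and x: "x \<in> N \<rightarrow>\<^sub>M borel" and z: "\<And>i. i < n \<Longrightarrow> (\<lambda>w. z w i) \<in> N \<rightarrow>\<^sub>M borel"
  shows "(\<lambda>w. fiter F (z w) n (x w)) \<in> N \<rightarrow>\<^sub>M borel"
  using z
proof (induct n)
  case (Suc n)
  then have "(\<lambda>w. (fiter F (z w) n (x w), z w n)) \<in> N \<rightarrow>\<^sub>M borel \<Otimes>\<^sub>M borel"
    by (intro measurable_Pair) auto
  from measurable_compose[OF this F] show ?case by simp
qed (use x in simp)

definition path_backward :: "('a \<Rightarrow> 'b \<Rightarrow> 'a) \<Rightarrow> 'a \<Rightarrow> (int \<Rightarrow> 'b) \<Rightarrow> nat \<Rightarrow> 'a" where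
  "path_backward F x w s = fiter F (\<lambda>i. w (- int s + int i)) (Suc s) x"

text \<open>The fallback value \<open>x\<close> is never used on a set of positive probability: the backward
  iterates converge almost surely (\<open>AE_backward_tendsto_X\<close> below).\<close>
definition path_limit :: "('a \<Rightarrow> 'b \<Rightarrow> 'a) \<Rightarrow> 'a::t2_space \<Rightarrow> (int \<Rightarrow> 'b) \<Rightarrow> 'a" where
  "path_limit F x w = (if convergent (path_backward F x w) then lim (path_backward F x w) else x)"

lemma measurable_path_limit:
  fixes F :: "'a::polish_space \<Rightarrow> 'b::polish_space \<Rightarrow> 'a"
  assumes F: "(\<lambda>(x, z). F x z) \<in> borel \<Otimes>\<^sub>M borel \<rightarrow>\<^sub>M borel"
  shows "path_limit F x \<in> path_space \<rightarrow>\<^sub>M borel"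
proof -
  have [measurable]: "(\<lambda>w. path_backward F x w s) \<in> path_space \<rightarrow>\<^sub>M borel" for s
    unfolding path_backward_def by (intro measurable_fiter[OF F]) auto
  have [measurable]: "Measurable.pred path_space (\<lambda>w. convergent (path_backward F x w))"
    using pred_convergent[of "\<lambda>s w. path_backward F x w s" path_space] by simp
  show ?thesis
  proof (rule borel_measurable_LIMSEQ_metric)
    fix w
    show "(\<lambda>s. if convergent (path_backward F x w) then path_backward F x w s else x) \<longlonglongrightarrow> path_limit F x w"
      by (cases "convergent (path_backward F x w)") (auto simp: path_limit_def convergent_LIMSEQ_iff[symmetric])
  qed measurable
qed

definition limit_path_map :: "('a \<Rightarrow> 'b \<Rightarrow> 'a) \<Rightarrow> 'a::t2_space \<Rightarrow> (int \<Rightarrow> 'b) \<Rightarrow> int \<Rightarrow> 'a \<times> 'b" where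
  "limit_path_map F x w t = (path_limit F x (\<lambda>k. w (t + k)), w t)"

lemma measurable_limit_path_map:
  fixes F :: "'a::polish_space \<Rightarrow> 'b::polish_space \<Rightarrow> 'a"
  assumes F: "(\<lambda>(x, z). F x z) \<in> borel \<Otimes>\<^sub>M borel \<rightarrow>\<^sub>M borel"
  shows "limit_path_map F x \<in> path_space \<rightarrow>\<^sub>M path_space"
  unfolding measurable_path_space_iff limit_path_map_def borel_prod[symmetric]
  using measurable_compose[OF measurable_path_space_shift measurable_path_limit[OF F]]
  by (auto intro!: measurable_Pair)

lemma limit_path_map_shift: "limit_path_map F x (\<lambda>j. w (j + k)) t = limit_path_map F x w (t + k)"
  unfolding limit_path_map_def by (simp add: algebra_simps)

lemma nn_integral_contraction_reg_cond_distr: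
  fixes U V :: "'w \<Rightarrow> 'a::{metric_space, second_countable_topology}"
  assumes M: "prob_space M" and G: "subalgebra M G"
    and K: "reg_cond_distr M G N Y K" and Y: "Y \<in> M \<rightarrow>\<^sub>M N"
    and U: "U \<in> G \<rightarrow>\<^sub>M borel" and V: "V \<in> G \<rightarrow>\<^sub>M borel"
    and h: "(\<lambda>((x, y), z). h x y z) \<in> borel_measurable ((borel \<Otimes>\<^sub>M borel) \<Otimes>\<^sub>M N)"
    and c: "c \<ge> 0"
    and contraction: "AE \<omega> in M. \<forall>x y. (\<integral>\<^sup>+z. h x y z \<partial>K \<omega>) \<le> ennreal (c * dist x y powr p)"
  shows "(\<integral>\<^sup>+\<omega>. h (U \<omega>) (V \<omega>) (Y \<omega>) \<partial>M) \<le> ennreal c * (\<integral>\<^sup>+\<omega>. ennreal (dist (U \<omega>) (V \<omega>) powr p) \<partial>M)"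
proof -
  have UV_dist: "(\<lambda>\<omega>. ennreal (dist (U \<omega>) (V \<omega>) powr p)) \<in> borel_measurable M"
    using measurable_from_subalg[OF G U] measurable_from_subalg[OF G V] by measurable
  have UV: "(\<lambda>\<omega>. (U \<omega>, V \<omega>)) \<in> G \<rightarrow>\<^sub>M borel \<Otimes>\<^sub>M borel"
    using U V by (rule measurable_Pair)
  have "(\<integral>\<^sup>+\<omega>. h (U \<omega>) (V \<omega>) (Y \<omega>) \<partial>M) = (\<integral>\<^sup>+\<omega>. (\<integral>\<^sup>+z. h (U \<omega>) (V \<omega>) z \<partial>K \<omega>) \<partial>M)"
    using nn_integral_reg_cond_distr[OF M G K Y UV h] by simp
  also have "\<dots> \<le> (\<integral>\<^sup>+\<omega>. ennreal (c * dist (U \<omega>) (V \<omega>) powr p) \<partial>M)"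
    using contraction by (intro nn_integral_mono_AE) auto
  also have "\<dots> = ennreal c * (\<integral>\<^sup>+\<omega>. ennreal (dist (U \<omega>) (V \<omega>) powr p) \<partial>M)"
    using c UV_dist by (subst nn_integral_cmult[symmetric]) (auto simp: ennreal_mult)
  finally show ?thesis .
qed

locale random_iteration =
  fixes M :: "'w measure"
    and Fl :: "int \<Rightarrow> 'w measure"
    and F :: "'a::polish_space \<Rightarrow> 'b::polish_space \<Rightarrow> 'a"
    and \<zeta> :: "int \<Rightarrow> 'w \<Rightarrow> 'b"
    and p L \<kappa> :: real and m :: nat and x0 :: 'a
  assumes M: "prob_space M"
    and filt_sub: "\<And>t. subalgebra M (Fl t)"
    and filt_mono: "\<And>s t. s \<le> t \<Longrightarrow> sets (Fl s) \<subseteq> sets (Fl t)"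
    and F_meas: "(\<lambda>(x, z). F x z) \<in> (borel \<Otimes>\<^sub>M borel) \<rightarrow>\<^sub>M borel"
    and adapted: "\<And>t. \<zeta> t \<in> Fl t \<rightarrow>\<^sub>M borel"
    and p: "p \<ge> 1" and L: "L > 0" and \<kappa>: "0 < \<kappa>" "\<kappa> < 1" and m: "m \<ge> 1"
    and A1: "(SUP t. \<integral>\<^sup>+ \<omega>. ennreal (dist (F x0 (\<zeta> t \<omega>)) x0 powr p) \<partial>M) < \<infinity>"
    and A2: "\<And>t. \<exists>K. reg_cond_distr M (Fl (t - 1)) (PiM {..<m} (\<lambda>_. borel))
                  (\<lambda>\<omega>. \<lambda>i\<in>{..<m}. \<zeta> (t + int i) \<omega>) K \<and>
               (AE \<omega> in M. \<forall>x y.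
                  (\<integral>\<^sup>+ z. ennreal (dist (F x (z 0)) (F y (z 0)) powr p) \<partial>K \<omega>)
                     \<le> ennreal (L powr p * dist x y powr p) \<and>
                  (\<integral>\<^sup>+ z. ennreal (dist (fiter F z m x) (fiter F z m y) powr p) \<partial>K \<omega>)
                     \<le> ennreal (\<kappa> powr p * dist x y powr p))"
begin

abbreviation dp :: "'a \<Rightarrow> 'a \<Rightarrow> ennreal" where
  "dp x y \<equiv> ennreal (dist x y powr p)"

lemma measurable_F_comp:
  assumes "f \<in> N \<rightarrow>\<^sub>M borel" "g \<in> N \<rightarrow>\<^sub>M borel"
  shows "(\<lambda>\<omega>. F (f \<omega>) (g \<omega>)) \<in> N \<rightarrow>\<^sub>M borel"
  using measurable_compose[OF measurable_Pair[OF assms] F_meas] by simp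

lemma measurable_filtration_mono: "s \<le> t \<Longrightarrow> f \<in> Fl s \<rightarrow>\<^sub>M N \<Longrightarrow> f \<in> Fl t \<rightarrow>\<^sub>M N"
  using filt_sub[of s] filt_sub[of t] filt_mono[of s t]
  by (intro measurable_from_subalg[of "Fl t" "Fl s"]) (auto simp: subalgebra_def)

lemma measurable_filtration_M: "f \<in> Fl s \<rightarrow>\<^sub>M N \<Longrightarrow> f \<in> M \<rightarrow>\<^sub>M N"
  using measurable_from_subalg[OF filt_sub] by blast

lemma emeasure_space_M[simp]: "emeasure M (space M) = 1"
  using prob_space.emeasure_space_1[OF M] .

lemma measurable_\<zeta>[measurable]: "\<zeta> t \<in> M \<rightarrow>\<^sub>M borel"
  using measurable_filtration_M[OF adapted] .

text \<open>\<open>flow r n \<omega>\<close> is the paper's \<open>f\<^sub>r\<^sup>r\<^sup>+\<^sup>n\<^sup>-\<^sup>1\<close>, i.e.\ the \<open>n\<close> maps driven by \<open>\<zeta> r, \<dots>, \<zeta> (r + n - 1)\<close>.\<close>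
definition flow :: "int \<Rightarrow> nat \<Rightarrow> 'w \<Rightarrow> 'a \<Rightarrow> 'a" where
  "flow r n \<omega> x = fiter F (\<lambda>i. \<zeta> (r + int i) \<omega>) n x"

lemma flow_add: "flow r (a + b) \<omega> x = flow (r + int a) b \<omega> (flow r a \<omega> x)"
  unfolding flow_def by (simp add: fiter_add add.assoc)

lemma flow_1[simp]: "flow r (Suc 0) \<omega> x = F x (\<zeta> r \<omega>)"
  unfolding flow_def by simp

lemma measurable_flow:
  assumes U: "U \<in> Fl (r - 1) \<rightarrow>\<^sub>M borel"
  shows "(\<lambda>\<omega>. flow r n \<omega> (U \<omega>)) \<in> Fl (r + int n - 1) \<rightarrow>\<^sub>M borel"
proof (induct n)
  case (Suc n)
  have "(\<lambda>\<omega>. flow r n \<omega> (U \<omega>)) \<in> Fl (r + int (Suc n) - 1) \<rightarrow>\<^sub>M borel"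
    by (rule measurable_filtration_mono[OF _ Suc]) simp
  moreover have "\<zeta> (r + int n) \<in> Fl (r + int (Suc n) - 1) \<rightarrow>\<^sub>M borel"
    using adapted[of "r + int n"] by simp
  ultimately show ?case using measurable_F_comp by (simp add: flow_def)
qed (use U in \<open>simp add: flow_def\<close>)

lemma flow_Lp_step:
  assumes U: "U \<in> Fl (t - 1) \<rightarrow>\<^sub>M borel" and V: "V \<in> Fl (t - 1) \<rightarrow>\<^sub>M borel"
  shows "(\<integral>\<^sup>+\<omega>. dp (flow t 1 \<omega> (U \<omega>)) (flow t 1 \<omega> (V \<omega>)) \<partial>M)
           \<le> ennreal (L powr p) * (\<integral>\<^sup>+\<omega>. dp (U \<omega>) (V \<omega>) \<partial>M)"
    and "(\<integral>\<^sup>+\<omega>. dp (flow t m \<omega> (U \<omega>)) (flow t m \<omega> (V \<omega>)) \<partial>M)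
           \<le> ennreal (\<kappa> powr p) * (\<integral>\<^sup>+\<omega>. dp (U \<omega>) (V \<omega>) \<partial>M)"
proof -
  let ?N = "PiM {..<m} (\<lambda>_. (borel :: 'b measure))"
  define Y where "Y = (\<lambda>\<omega>. \<lambda>i\<in>{..<m}. \<zeta> (t + int i) \<omega>)"
  obtain K where K: "reg_cond_distr M (Fl (t - 1)) ?N Y K"
    and AE: "AE \<omega> in M. \<forall>x y.
                  (\<integral>\<^sup>+ z. dp (F x (z 0)) (F y (z 0)) \<partial>K \<omega>) \<le> ennreal (L powr p * dist x y powr p) \<and>
                  (\<integral>\<^sup>+ z. dp (fiter F z m x) (fiter F z m y) \<partial>K \<omega>) \<le> ennreal (\<kappa> powr p * dist x y powr p)"
    using A2[of t] unfolding Y_def by blast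
  have AE_L: "AE \<omega> in M. \<forall>x y. (\<integral>\<^sup>+ z. dp (F x (z 0)) (F y (z 0)) \<partial>K \<omega>) \<le> ennreal (L powr p * dist x y powr p)"
    and AE_\<kappa>: "AE \<omega> in M. \<forall>x y. (\<integral>\<^sup>+ z. dp (fiter F z m x) (fiter F z m y) \<partial>K \<omega>) \<le> ennreal (\<kappa> powr p * dist x y powr p)"
    using AE by (auto elim: eventually_mono)
  have Y: "Y \<in> M \<rightarrow>\<^sub>M ?N" unfolding Y_def by measurable
  note contraction = nn_integral_contraction_reg_cond_distr[OF M filt_sub K Y U V]
  have fiter_meas: "(\<lambda>w. fiter F (snd w) n (g (fst w))) \<in> (borel \<Otimes>\<^sub>M borel) \<Otimes>\<^sub>M ?N \<rightarrow>\<^sub>M borel"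
    if "n \<le> m" and [measurable]: "g \<in> borel \<Otimes>\<^sub>M borel \<rightarrow>\<^sub>M borel" for n and g :: "'a \<times> 'a \<Rightarrow> 'a"
    using that(1) by (intro measurable_fiter[OF F_meas]) auto
  have "(\<lambda>((x, y), z). dp (F x (z 0)) (F y (z 0))) \<in> borel_measurable ((borel \<Otimes>\<^sub>M borel) \<Otimes>\<^sub>M ?N)"
  proof -
    note [measurable] = fiter_meas[OF m measurable_fst, simplified] fiter_meas[OF m measurable_snd, simplified]
    show ?thesis unfolding case_prod_beta' by measurable
  qed
  moreover have "flow t 1 \<omega> x = F x (Y \<omega> 0)" for \<omega> x
    using m by (simp add: Y_def)
  ultimately show "(\<integral>\<^sup>+\<omega>. dp (flow t 1 \<omega> (U \<omega>)) (flow t 1 \<omega> (V \<omega>)) \<partial>M)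
           \<le> ennreal (L powr p) * (\<integral>\<^sup>+\<omega>. dp (U \<omega>) (V \<omega>) \<partial>M)"
    using contraction[OF _ _ AE_L] by simp
  have "(\<lambda>((x, y), z). dp (fiter F z m x) (fiter F z m y)) \<in> borel_measurable ((borel \<Otimes>\<^sub>M borel) \<Otimes>\<^sub>M ?N)"
  proof -
    note [measurable] = fiter_meas[OF order_refl measurable_fst] fiter_meas[OF order_refl measurable_snd]
    show ?thesis unfolding case_prod_beta' by measurable
  qed
  moreover have "flow t m \<omega> x = fiter F (Y \<omega>) m x" for \<omega> x
    unfolding flow_def by (rule fiter_cong) (simp add: Y_def)
  ultimately show "(\<integral>\<^sup>+\<omega>. dp (flow t m \<omega> (U \<omega>)) (flow t m \<omega> (V \<omega>)) \<partial>M)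
           \<le> ennreal (\<kappa> powr p) * (\<integral>\<^sup>+\<omega>. dp (U \<omega>) (V \<omega>) \<partial>M)"
    using contraction[OF _ _ AE_\<kappa>] by simp
qed

lemma flow_Lp_iterate:
  assumes step: "\<And>r U V. U \<in> Fl (r - 1) \<rightarrow>\<^sub>M borel \<Longrightarrow> V \<in> Fl (r - 1) \<rightarrow>\<^sub>M borel \<Longrightarrow>
      (\<integral>\<^sup>+\<omega>. dp (flow r k \<omega> (U \<omega>)) (flow r k \<omega> (V \<omega>)) \<partial>M) \<le> ennreal c * (\<integral>\<^sup>+\<omega>. dp (U \<omega>) (V \<omega>) \<partial>M)"
    and "U \<in> Fl (r - 1) \<rightarrow>\<^sub>M borel" "V \<in> Fl (r - 1) \<rightarrow>\<^sub>M borel"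
  shows "(\<integral>\<^sup>+\<omega>. dp (flow r (k * q) \<omega> (U \<omega>)) (flow r (k * q) \<omega> (V \<omega>)) \<partial>M)
    \<le> ennreal c ^ q * (\<integral>\<^sup>+\<omega>. dp (U \<omega>) (V \<omega>) \<partial>M)"
  using assms(2,3)
proof (induct q arbitrary: r U V)
  case 0
  then show ?case by (simp add: flow_def)
next
  case (Suc q)
  let ?U = "\<lambda>\<omega>. flow r k \<omega> (U \<omega>)" and ?V = "\<lambda>\<omega>. flow r k \<omega> (V \<omega>)"
  have "(\<integral>\<^sup>+\<omega>. dp (flow r (k * Suc q) \<omega> (U \<omega>)) (flow r (k * Suc q) \<omega> (V \<omega>)) \<partial>M)
      = (\<integral>\<^sup>+\<omega>. dp (flow (r + int k) (k * q) \<omega> (?U \<omega>)) (flow (r + int k) (k * q) \<omega> (?V \<omega>)) \<partial>M)"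
    by (simp add: flow_add)
  also have "\<dots> \<le> ennreal c ^ q * (\<integral>\<^sup>+\<omega>. dp (?U \<omega>) (?V \<omega>) \<partial>M)"
    using measurable_flow[OF Suc(2), of k] measurable_flow[OF Suc(3), of k]
    by (intro Suc(1)) (simp_all add: algebra_simps)
  also have "\<dots> \<le> ennreal c ^ q * (ennreal c * (\<integral>\<^sup>+\<omega>. dp (U \<omega>) (V \<omega>) \<partial>M))"
    by (intro mult_left_mono step Suc(2,3)) simp
  finally show ?case by (simp add: mult_ac)
qed

definition \<rho> :: real where
  "\<rho> = \<kappa> powr (p / m)"

definition C_flow :: real where
  "C_flow = max 1 (L powr p) ^ m / \<kappa> powr p"

lemma \<rho>_pos: "0 < \<rho>" and \<rho>_less_1: "\<rho> < 1" and C_flow_pos: "C_flow > 0"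
proof -
  show "0 < \<rho>" unfolding \<rho>_def using \<kappa> by simp
  show "\<rho> < 1" unfolding \<rho>_def using powr_less_mono2[of "p / m" \<kappa> 1] \<kappa> p m by simp
  show "C_flow > 0" unfolding C_flow_def using \<kappa> by simp
qed

lemma power_mod_div_le_C_flow: "(L powr p) ^ (n mod m) * (\<kappa> powr p) ^ (n div m) \<le> C_flow * \<rho> ^ n"
proof -
  have "(L powr p) ^ (n mod m) \<le> max 1 (L powr p) ^ (n mod m)" by (rule power_mono) auto
  also have "\<dots> \<le> max 1 (L powr p) ^ m" using m by (intro power_increasing) auto
  finally have L_part: "(L powr p) ^ (n mod m) \<le> max 1 (L powr p) ^ m" .
  have "real n = real m * (n div m) + (n mod m)"
    by (metis of_nat_add of_nat_mult mult_div_mod_eq)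
  moreover have "real (n mod m) < real m" using m by simp
  ultimately have "real n / m < n div m + 1"
    using m by (simp add: field_simps)
  then have "p * n / m - p \<le> p * (n div m)"
    using p mult_left_mono[of "real n / m" "n div m + 1" p] by (simp add: algebra_simps)
  then have "(\<kappa> powr p) ^ (n div m) \<le> \<kappa> powr (p * n / m - p)"
    using \<kappa> by (simp add: powr_power mult.commute powr_mono')
  also have "\<dots> = \<rho> ^ n / \<kappa> powr p"
    unfolding \<rho>_def using \<kappa> by (simp add: powr_diff powr_power mult.commute)
  finally have "(\<kappa> powr p) ^ (n div m) \<le> \<rho> ^ n / \<kappa> powr p" .
  with L_part have "(L powr p) ^ (n mod m) * (\<kappa> powr p) ^ (n div m) \<le> max 1 (L powr p) ^ m * (\<rho> ^ n / \<kappa> powr p)"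
    by (intro mult_mono) auto
  then show ?thesis by (simp add: C_flow_def field_simps)
qed

lemma flow_Lp:
  assumes U: "U \<in> Fl (r - 1) \<rightarrow>\<^sub>M borel" and V: "V \<in> Fl (r - 1) \<rightarrow>\<^sub>M borel"
  shows "(\<integral>\<^sup>+\<omega>. dp (flow r n \<omega> (U \<omega>)) (flow r n \<omega> (V \<omega>)) \<partial>M)
          \<le> ennreal (C_flow * \<rho> ^ n) * (\<integral>\<^sup>+\<omega>. dp (U \<omega>) (V \<omega>) \<partial>M)"
proof -
  let ?q = "n div m" and ?j = "n mod m"
  let ?U = "\<lambda>\<omega>. flow r (m * ?q) \<omega> (U \<omega>)" and ?V = "\<lambda>\<omega>. flow r (m * ?q) \<omega> (V \<omega>)"
  have "(\<integral>\<^sup>+\<omega>. dp (flow r n \<omega> (U \<omega>)) (flow r n \<omega> (V \<omega>)) \<partial>M)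
      = (\<integral>\<^sup>+\<omega>. dp (flow (r + int (m * ?q)) (1 * ?j) \<omega> (?U \<omega>)) (flow (r + int (m * ?q)) (1 * ?j) \<omega> (?V \<omega>)) \<partial>M)"
    by (simp only: flow_add[symmetric] mult_1 mult_div_mod_eq)
  also have "\<dots> \<le> ennreal (L powr p) ^ ?j * (\<integral>\<^sup>+\<omega>. dp (?U \<omega>) (?V \<omega>) \<partial>M)"
    using measurable_flow[OF U, of "m * ?q"] measurable_flow[OF V, of "m * ?q"]
    by (intro flow_Lp_iterate flow_Lp_step(1)) (simp_all add: algebra_simps)
  also have "\<dots> \<le> ennreal (L powr p) ^ ?j * (ennreal (\<kappa> powr p) ^ ?q * (\<integral>\<^sup>+\<omega>. dp (U \<omega>) (V \<omega>) \<partial>M))"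
    by (intro mult_left_mono flow_Lp_iterate flow_Lp_step(2) U V) auto
  also have "\<dots> = ennreal ((L powr p) ^ ?j * (\<kappa> powr p) ^ ?q) * (\<integral>\<^sup>+\<omega>. dp (U \<omega>) (V \<omega>) \<partial>M)"
    by (simp add: ennreal_power ennreal_mult mult.assoc)
  also have "\<dots> \<le> ennreal (C_flow * \<rho> ^ n) * (\<integral>\<^sup>+\<omega>. dp (U \<omega>) (V \<omega>) \<partial>M)"
    using power_mod_div_le_C_flow by (intro mult_right_mono ennreal_leI) auto
  finally show ?thesis .
qed

definition A1_const :: real where
  "A1_const = enn2real (SUP t. \<integral>\<^sup>+ \<omega>. dp (F x0 (\<zeta> t \<omega>)) x0 \<partial>M)"

definition disp_const :: "'a \<Rightarrow> real" where
  "disp_const x = 3 powr (p - 1) * (dist x x0 powr p + A1_const + L powr p * dist x0 x powr p)"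

lemma A1_const: "(SUP t. \<integral>\<^sup>+ \<omega>. dp (F x0 (\<zeta> t \<omega>)) x0 \<partial>M) = ennreal A1_const" "A1_const \<ge> 0"
  using A1 unfolding A1_const_def by (auto simp: ennreal_enn2real less_top)

lemma disp_const_nonneg: "disp_const x \<ge> 0"
  unfolding disp_const_def using A1_const(2) by simp

lemma displacement_Lp: "(\<integral>\<^sup>+\<omega>. dp x (F x (\<zeta> r \<omega>)) \<partial>M) \<le> ennreal (disp_const x)"
proof -
  have [measurable]: "(\<lambda>\<omega>. F y (\<zeta> r \<omega>)) \<in> borel_measurable M" for y
    by (intro measurable_F_comp) auto
  have "(\<integral>\<^sup>+\<omega>. dp x (F x (\<zeta> r \<omega>)) \<partial>M) \<le> ennreal (3 powr (p - 1)) * (dp x x0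
      + (\<integral>\<^sup>+\<omega>. dp x0 (F x0 (\<zeta> r \<omega>)) \<partial>M) + (\<integral>\<^sup>+\<omega>. dp (F x0 (\<zeta> r \<omega>)) (F x (\<zeta> r \<omega>)) \<partial>M))"
    using nn_integral_dist_powr_triangle3[OF p, where f="\<lambda>_. x" and g="\<lambda>_. x0"
        and h="\<lambda>\<omega>. F x0 (\<zeta> r \<omega>)" and k="\<lambda>\<omega>. F x (\<zeta> r \<omega>)" and M=M]
    by simp
  also have "\<dots> \<le> ennreal (3 powr (p - 1)) * (dp x x0 + ennreal A1_const + ennreal (L powr p) * dp x0 x)"
  proof (intro mult_left_mono add_mono order_refl)
    show "(\<integral>\<^sup>+\<omega>. dp x0 (F x0 (\<zeta> r \<omega>)) \<partial>M) \<le> ennreal A1_const"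
      unfolding A1_const(1)[symmetric] dist_commute[of x0] by (rule SUP_upper) simp
    show "(\<integral>\<^sup>+\<omega>. dp (F x0 (\<zeta> r \<omega>)) (F x (\<zeta> r \<omega>)) \<partial>M) \<le> ennreal (L powr p) * dp x0 x"
      using flow_Lp_step(1)[of "\<lambda>_. x0" r "\<lambda>_. x"] by simp
  qed simp
  also have "\<dots> = ennreal (disp_const x)"
    unfolding disp_const_def using A1_const(2) by (simp add: ennreal_mult algebra_simps)
  finally show ?thesis .
qed

text \<open>\<open>backward x t s\<close> is the paper's \<open>f\<^sub>t\<^sub>-\<^sub>s\<^sup>t(x)\<close>.\<close>
definition backward :: "'a \<Rightarrow> int \<Rightarrow> nat \<Rightarrow> 'w \<Rightarrow> 'a" where
  "backward x t s \<omega> = flow (t - int s) (Suc s) \<omega> x"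

lemma measurable_backward[measurable]: "backward x t s \<in> borel_measurable M"
  unfolding backward_def using measurable_flow[of "\<lambda>_. x" "t - int s"]
  by (intro measurable_filtration_M) simp

lemma backward_Suc: "backward x t (Suc s) \<omega> = flow (t - int s) (Suc s) \<omega> (F x (\<zeta> (t - int s - 1) \<omega>))"
proof -
  have "backward x t (Suc s) \<omega> = flow (t - int (Suc s)) (Suc 0 + Suc s) \<omega> x"
    by (simp add: backward_def)
  also have "\<dots> = flow (t - int (Suc s) + int (Suc 0)) (Suc s) \<omega> (flow (t - int (Suc s)) (Suc 0) \<omega> x)"
    by (rule flow_add)
  finally show ?thesis by (simp add: algebra_simps)
qed

lemma backward_increment_Lp:
  "(\<integral>\<^sup>+\<omega>. dp (backward x t s \<omega>) (backward x t (Suc s) \<omega>) \<partial>M) \<le> ennreal (C_flow * disp_const x * \<rho> ^ s)"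
proof -
  let ?r = "t - int s"
  have "(\<integral>\<^sup>+\<omega>. dp (backward x t s \<omega>) (backward x t (Suc s) \<omega>) \<partial>M)
      \<le> ennreal (C_flow * \<rho> ^ Suc s) * (\<integral>\<^sup>+\<omega>. dp x (F x (\<zeta> (?r - 1) \<omega>)) \<partial>M)"
    unfolding backward_Suc using flow_Lp[where U="\<lambda>_. x" and r="?r" and V="\<lambda>\<omega>. F x (\<zeta> (?r - 1) \<omega>)" and n="Suc s"]
    by (simp add: backward_def measurable_F_comp adapted)
  also have "\<dots> \<le> ennreal (C_flow * \<rho> ^ Suc s) * ennreal (disp_const x)"
    by (intro mult_left_mono displacement_Lp) simp
  also have "\<dots> \<le> ennreal (C_flow * disp_const x * \<rho> ^ s)"
    using \<rho>_pos \<rho>_less_1 C_flow_pos disp_const_nonneg[of x]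
    by (simp add: ennreal_mult[symmetric] mult_left_le_one_le mult_ac)
  finally show ?thesis .
qed

text \<open>\<open>X x t\<close> is the paper's \<open>X\<^sub>t(x)\<close>: it depends on \<open>\<zeta>\<close> only through the path seen from time \<open>t\<close>,
  which is what makes \<open>(X x t, \<zeta> t)\<close> inherit stationarity and ergodicity.\<close>
definition X :: "'a \<Rightarrow> int \<Rightarrow> 'w \<Rightarrow> 'a" where
  "X x t \<omega> = path_limit F x (\<lambda>k. \<zeta> (t + k) \<omega>)"

lemma measurable_X[measurable]: "X x t \<in> borel_measurable M"
proof -
  have "(\<lambda>\<omega> k. \<zeta> (t + k) \<omega>) \<in> M \<rightarrow>\<^sub>M path_space"
    by (simp add: measurable_path_space_iff)
  then show ?thesis
    unfolding X_def using measurable_path_limit[OF F_meas] by measurable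
qed

lemma path_backward_eq_backward: "path_backward F x (\<lambda>k. \<zeta> (t + k) \<omega>) s = backward x t s \<omega>"
  unfolding path_backward_def backward_def flow_def by (simp add: algebra_simps)

lemma AE_backward_tendsto_X: "AE \<omega> in M. (\<lambda>s. backward x t s \<omega>) \<longlonglongrightarrow> X x t \<omega>"
proof -
  have "AE \<omega> in M. convergent (\<lambda>s. backward x t s \<omega>)"
    using \<rho>_pos \<rho>_less_1 C_flow_pos disp_const_nonneg[of x]
    by (intro AE_convergent_of_geometric_increments[OF _ p _ _ _ backward_increment_Lp]) auto
  moreover have "path_backward F x (\<lambda>k. \<zeta> (t + k) \<omega>) = (\<lambda>s. backward x t s \<omega>)" for \<omega>
    using path_backward_eq_backward by blast
  ultimately show ?thesis
    by (auto simp: X_def path_limit_def convergent_LIMSEQ_iff[symmetric] elim!: eventually_mono)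
qed

lemma backward_X_Lp:
  "(\<integral>\<^sup>+\<omega>. dp (backward x t s \<omega>) (X x t \<omega>) \<partial>M)
    \<le> ennreal (geometric_tail_const \<rho> p * (C_flow * disp_const x) * \<rho> ^ s)"
  using \<rho>_pos \<rho>_less_1 C_flow_pos disp_const_nonneg[of x]
  by (intro nn_integral_dist_lim_le_geometric[OF _ p _ _ _ backward_increment_Lp AE_backward_tendsto_X]) auto

lemma C_flow_\<rho>_Suc_le:
  assumes "c \<ge> 0"
  shows "ennreal (C_flow * \<rho> ^ Suc s) * ennreal c \<le> ennreal (C_flow * c * \<rho> ^ s)"
proof -
  have "C_flow * c * \<rho> ^ s * \<rho> \<le> C_flow * c * \<rho> ^ s"
    using assms \<rho>_pos \<rho>_less_1 C_flow_pos by (intro mult_left_le) auto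
  then show ?thesis
    using assms \<rho>_pos C_flow_pos by (simp add: ennreal_mult[symmetric] mult_ac)
qed

lemma X_moment_bounded: "(SUP t. \<integral>\<^sup>+\<omega>. dp (X x t \<omega>) x0 \<partial>M) < \<infinity>"
proof -
  define K where "K = 3 powr (p - 1) *
    (geometric_tail_const \<rho> p * (C_flow * disp_const x) + disp_const x + dist x x0 powr p)"
  have "(\<integral>\<^sup>+\<omega>. dp (X x t \<omega>) x0 \<partial>M) \<le> ennreal K" for t
  proof -
    have "(\<integral>\<^sup>+\<omega>. dp (X x t \<omega>) x0 \<partial>M) \<le> ennreal (3 powr (p - 1)) * ((\<integral>\<^sup>+\<omega>. dp (X x t \<omega>) (backward x t 0 \<omega>) \<partial>M)
        + (\<integral>\<^sup>+\<omega>. dp (backward x t 0 \<omega>) x \<partial>M) + dp x x0)"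
      using nn_integral_dist_powr_triangle3[OF p, where f="X x t" and g="backward x t 0"
          and h="\<lambda>_. x" and k="\<lambda>_. x0" and M=M] by simp
    also have "\<dots> \<le> ennreal (3 powr (p - 1))
        * (ennreal (geometric_tail_const \<rho> p * (C_flow * disp_const x)) + ennreal (disp_const x) + dp x x0)"
    proof (intro mult_left_mono add_mono order_refl)
      show "(\<integral>\<^sup>+\<omega>. dp (X x t \<omega>) (backward x t 0 \<omega>) \<partial>M) \<le> ennreal (geometric_tail_const \<rho> p * (C_flow * disp_const x))"
        using backward_X_Lp[of x t 0] by (simp add: dist_commute)
      show "(\<integral>\<^sup>+\<omega>. dp (backward x t 0 \<omega>) x \<partial>M) \<le> ennreal (disp_const x)"
        using displacement_Lp[of x t] by (simp add: backward_def dist_commute)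
    qed simp
    also have "\<dots> = ennreal K"
      unfolding K_def using geometric_tail_weights(6)[OF p \<rho>_pos \<rho>_less_1] C_flow_pos disp_const_nonneg[of x]
      by (simp add: ennreal_mult)
    finally show ?thesis .
  qed
  then have "(SUP t. \<integral>\<^sup>+\<omega>. dp (X x t \<omega>) x0 \<partial>M) \<le> ennreal K" by (rule SUP_least)
  then show ?thesis by (simp add: le_less_trans)
qed

lemma AE_X_eq: "AE \<omega> in M. X x t \<omega> = X y t \<omega>"
proof -
  have bound: "(\<integral>\<^sup>+\<omega>. dp (backward x t s \<omega>) (backward y t s \<omega>) \<partial>M) \<le> ennreal (C_flow * dist x y powr p * \<rho> ^ s)" for s
  proof -
    have "(\<integral>\<^sup>+\<omega>. dp (backward x t s \<omega>) (backward y t s \<omega>) \<partial>M) \<le> ennreal (C_flow * \<rho> ^ Suc s) * dp x y"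
      using flow_Lp[where U="\<lambda>_. x" and V="\<lambda>_. y" and r="t - int s" and n="Suc s"] by (simp add: backward_def)
    also have "\<dots> \<le> ennreal (C_flow * dist x y powr p * \<rho> ^ s)" by (rule C_flow_\<rho>_Suc_le) simp
    finally show ?thesis .
  qed
  have "AE \<omega> in M. (\<lambda>s. dist (backward x t s \<omega>) (backward y t s \<omega>)) \<longlonglongrightarrow> 0"
    by (rule AE_tendsto_dist_of_geometric_moments[OF _ _ \<rho>_pos \<rho>_less_1 _ bound])
      (use p C_flow_pos in auto)
  with AE_backward_tendsto_X[of x t] AE_backward_tendsto_X[of y t] show ?thesis
  proof eventually_elim
    case (elim \<omega>)
    have "(\<lambda>s. dist (backward x t s \<omega>) (backward y t s \<omega>)) \<longlonglongrightarrow> dist (X x t \<omega>) (X y t \<omega>)"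
      using elim by (intro tendsto_dist) auto
    then have "dist (X x t \<omega>) (X y t \<omega>) = 0" using elim(3) by (rule LIMSEQ_unique)
    then show ?case by simp
  qed
qed

lemma X_eq_limit_path_map: "(X x t \<omega>, \<zeta> t \<omega>) = limit_path_map F x (\<lambda>k. \<zeta> k \<omega>) t"
  by (simp add: X_def limit_path_map_def)

lemma stationary_X: "stationary M \<zeta> \<Longrightarrow> stationary M (\<lambda>t \<omega>. (X x t \<omega>, \<zeta> t \<omega>))"
  unfolding X_eq_limit_path_map
  by (rule stationary_comp[OF measurable_limit_path_map[OF F_meas] limit_path_map_shift]) auto

lemma ergodic_X: "ergodic M \<zeta> \<Longrightarrow> ergodic M (\<lambda>t \<omega>. (X x t \<omega>, \<zeta> t \<omega>))"
  unfolding X_eq_limit_path_map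
  by (rule ergodic_comp[OF measurable_limit_path_map[OF F_meas] limit_path_map_shift]) auto

lemma solution_eq_flow:
  assumes "\<And>t. Y t \<omega> = F (Y (t - 1) \<omega>) (\<zeta> t \<omega>)"
  shows "Y (r + int n - 1) \<omega> = flow r n \<omega> (Y (r - 1) \<omega>)"
proof (induction n)
  case (Suc n)
  have "Y (r + int (Suc n) - 1) \<omega> = F (Y (r + int n - 1) \<omega>) (\<zeta> (r + int n) \<omega>)"
    using assms[of "r + int n"] by simp
  then show ?case using Suc.IH by (simp add: flow_def)
qed (simp add: flow_def)

lemma backward_solution_Lp:
  assumes Y: "\<And>t. Y t \<in> Fl t \<rightarrow>\<^sub>M borel"
    and solution: "\<And>t. AE \<omega> in M. Y t \<omega> = F (Y (t - 1) \<omega>) (\<zeta> t \<omega>)"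
    and moment: "\<And>j. (\<integral>\<^sup>+\<omega>. dp x (Y j \<omega>) \<partial>M) \<le> ennreal D" and D: "D \<ge> 0"
  shows "(\<integral>\<^sup>+\<omega>. dp (backward x t s \<omega>) (Y t \<omega>) \<partial>M) \<le> ennreal (C_flow * D * \<rho> ^ s)"
proof -
  have "AE \<omega> in M. \<forall>t. Y t \<omega> = F (Y (t - 1) \<omega>) (\<zeta> t \<omega>)"
    using solution by (simp add: AE_all_countable)
  then have "AE \<omega> in M. Y t \<omega> = flow (t - int s) (Suc s) \<omega> (Y (t - int s - 1) \<omega>)"
  proof eventually_elim
    case (elim \<omega>)
    have "Y (t - int s + int (Suc s) - 1) \<omega> = flow (t - int s) (Suc s) \<omega> (Y (t - int s - 1) \<omega>)"
      by (rule solution_eq_flow) (rule elim[rule_format])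
    then show ?case by simp
  qed
  then have "(\<integral>\<^sup>+\<omega>. dp (backward x t s \<omega>) (Y t \<omega>) \<partial>M)
      = (\<integral>\<^sup>+\<omega>. dp (flow (t - int s) (Suc s) \<omega> x) (flow (t - int s) (Suc s) \<omega> (Y (t - int s - 1) \<omega>)) \<partial>M)"
    by (intro nn_integral_cong_AE) (auto simp: backward_def elim: eventually_mono)
  also have "\<dots> \<le> ennreal (C_flow * \<rho> ^ Suc s) * (\<integral>\<^sup>+\<omega>. dp x (Y (t - int s - 1) \<omega>) \<partial>M)"
    using Y by (intro flow_Lp) simp_all
  also have "\<dots> \<le> ennreal (C_flow * \<rho> ^ Suc s) * ennreal D"
    by (intro mult_left_mono moment) simp
  also have "\<dots> \<le> ennreal (C_flow * D * \<rho> ^ s)"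
    using D by (rule C_flow_\<rho>_Suc_le)
  finally show ?thesis .
qed

lemma AE_solution_eq_X:
  assumes Y: "\<And>t. Y t \<in> Fl t \<rightarrow>\<^sub>M borel"
    and solution: "\<And>t. AE \<omega> in M. Y t \<omega> = F (Y (t - 1) \<omega>) (\<zeta> t \<omega>)"
    and moment: "(SUP j. \<integral>\<^sup>+ \<omega>. dp (Y j \<omega>) x0 \<partial>M) < \<infinity>"
  shows "AE \<omega> in M. Y t \<omega> = X x t \<omega>"
proof -
  define S where "S = enn2real (SUP j. \<integral>\<^sup>+ \<omega>. dp (Y j \<omega>) x0 \<partial>M)"
  have S: "(SUP j. \<integral>\<^sup>+ \<omega>. dp (Y j \<omega>) x0 \<partial>M) = ennreal S" "S \<ge> 0"
    using moment unfolding S_def by (auto simp: ennreal_enn2real less_top)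
  define D where "D = 3 powr (p - 1) * (dist x x0 powr p + S)"
  have D: "D \<ge> 0" using S(2) by (simp add: D_def)
  have [measurable]: "Y j \<in> borel_measurable M" for j using measurable_filtration_M[OF Y] .
  have "(\<integral>\<^sup>+\<omega>. dp x (Y j \<omega>) \<partial>M) \<le> ennreal D" for j
  proof -
    have "(\<integral>\<^sup>+\<omega>. dp x (Y j \<omega>) \<partial>M) \<le> ennreal (3 powr (p - 1)) * (dp x x0 + (\<integral>\<^sup>+\<omega>. dp x0 (Y j \<omega>) \<partial>M) + 0)"
      using nn_integral_dist_powr_triangle3[OF p, where f="\<lambda>_. x" and g="\<lambda>_. x0" and h="Y j" and k="Y j" and M=M]
        p by simp
    also have "\<dots> \<le> ennreal (3 powr (p - 1)) * (dp x x0 + ennreal S + 0)"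
      unfolding S(1)[symmetric] dist_commute[of x0] by (intro mult_left_mono add_mono SUP_upper) auto
    also have "\<dots> = ennreal D" unfolding D_def using S(2) by (simp add: ennreal_mult)
    finally show ?thesis .
  qed
  then have bound: "(\<integral>\<^sup>+\<omega>. dp (backward x t s \<omega>) (Y t \<omega>) \<partial>M) \<le> ennreal (C_flow * D * \<rho> ^ s)" for s
    using backward_solution_Lp[OF Y solution _ D] by blast
  have "AE \<omega> in M. (\<lambda>s. dist (backward x t s \<omega>) (Y t \<omega>)) \<longlonglongrightarrow> 0"
  proof (rule AE_tendsto_dist_of_geometric_moments[where b="\<lambda>_. Y t", OF _ _ \<rho>_pos \<rho>_less_1 _ bound])
    show "(\<lambda>\<omega>. dist (backward x t s \<omega>) (Y t \<omega>)) \<in> borel_measurable M" for s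
      using measurable_backward measurable_filtration_M[OF Y] by (rule borel_measurable_dist)
  qed (use p C_flow_pos D in simp_all)
  with AE_backward_tendsto_X[of x t] show ?thesis
  proof (rule eventually_elim2)
    fix \<omega>
    assume "(\<lambda>s. backward x t s \<omega>) \<longlonglongrightarrow> X x t \<omega>"
      and "(\<lambda>s. dist (backward x t s \<omega>) (Y t \<omega>)) \<longlonglongrightarrow> 0"
    then show "Y t \<omega> = X x t \<omega>" unfolding tendsto_dist_iff[symmetric] by (rule LIMSEQ_unique[rotated])
  qed
qed

lemma backward_X_rate:
  "\<exists>C>0. \<forall>\<^sub>F s in sequentially. (SUP t. \<integral>\<^sup>+\<omega>. dp (backward x t s \<omega>) (X x t \<omega>) \<partial>M)
     \<le> ennreal ((C * \<kappa> powr (real s / real m)) powr p)"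
proof (intro exI conjI always_eventually allI)
  define Q where "Q = geometric_tail_const \<rho> p * (C_flow * disp_const x)"
  have Q: "Q \<ge> 0"
    unfolding Q_def using geometric_tail_weights(6)[OF p \<rho>_pos \<rho>_less_1] C_flow_pos disp_const_nonneg[of x]
    by simp
  show "(Q + 1) powr (1 / p) > 0" using Q by simp
  fix s
  have "((Q + 1) powr (1 / p) * \<kappa> powr (real s / real m)) powr p = (Q + 1) * \<rho> ^ s"
    using Q p \<kappa> by (simp add: powr_mult powr_powr \<rho>_def powr_power)
  then have le: "ennreal (Q * \<rho> ^ s) \<le> ennreal (((Q + 1) powr (1 / p) * \<kappa> powr (real s / real m)) powr p)"
    using \<rho>_pos by (intro ennreal_leI) simp
  show "(SUP t. \<integral>\<^sup>+\<omega>. dp (backward x t s \<omega>) (X x t \<omega>) \<partial>M)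
     \<le> ennreal (((Q + 1) powr (1 / p) * \<kappa> powr (real s / real m)) powr p)"
  proof (rule SUP_least)
    fix t
    show "(\<integral>\<^sup>+\<omega>. dp (backward x t s \<omega>) (X x t \<omega>) \<partial>M)
      \<le> ennreal (((Q + 1) powr (1 / p) * \<kappa> powr (real s / real m)) powr p)"
      using backward_X_Lp[of x t s] le unfolding Q_def by (rule order.trans)
  qed
qed

end

theorem theorem2:
  fixes M :: "'w measure"
    and Fl :: "int \<Rightarrow> 'w measure"
    and F :: "'a::polish_space \<Rightarrow> 'b::polish_space \<Rightarrow> 'a"
    and \<zeta> :: "int \<Rightarrow> 'w \<Rightarrow> 'b"
    and p L \<kappa> :: real and m :: nat and x0 :: 'a
  assumes M: "prob_space M"
    and filt_sub: "\<And>t. subalgebra M (Fl t)"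
    and filt_mono: "\<And>s t. s \<le> t \<Longrightarrow> sets (Fl s) \<subseteq> sets (Fl t)"
    and F_meas: "(\<lambda>(x, z). F x z) \<in> (borel \<Otimes>\<^sub>M borel) \<rightarrow>\<^sub>M borel"
    and adapted: "\<And>t. \<zeta> t \<in> Fl t \<rightarrow>\<^sub>M borel"
    and p: "p \<ge> 1" and L: "L > 0" and \<kappa>: "0 < \<kappa>" "\<kappa> < 1" and m: "m \<ge> 1"
    and A1: "(SUP t. \<integral>\<^sup>+ \<omega>. ennreal (dist (F x0 (\<zeta> t \<omega>)) x0 powr p) \<partial>M) < \<infinity>"
    and A2: "\<And>t. \<exists>K. reg_cond_distr M (Fl (t - 1)) (PiM {..<m} (\<lambda>_. borel))
                  (\<lambda>\<omega>. \<lambda>i\<in>{..<m}. \<zeta> (t + int i) \<omega>) K \<and>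
               (AE \<omega> in M. \<forall>x y.
                  (\<integral>\<^sup>+ z. ennreal (dist (F x (z 0)) (F y (z 0)) powr p) \<partial>K \<omega>)
                     \<le> ennreal (L powr p * dist x y powr p) \<and>
                  (\<integral>\<^sup>+ z. ennreal (dist (fiter F z m x) (fiter F z m y) powr p) \<partial>K \<omega>)
                     \<le> ennreal (\<kappa> powr p * dist x y powr p))"
  shows "\<exists>X :: 'a \<Rightarrow> int \<Rightarrow> 'w \<Rightarrow> 'a.
    (\<forall>x t. X x t \<in> M \<rightarrow>\<^sub>M borel) \<and>
    (\<forall>x. (SUP t. \<integral>\<^sup>+ \<omega>. ennreal (dist (X x t \<omega>) x0 powr p) \<partial>M) < \<infinity>) \<and>
    (\<forall>x. \<exists>C>0. \<forall>\<^sub>F s in sequentially.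
        (SUP t. \<integral>\<^sup>+ \<omega>. ennreal (dist (fiter F (\<lambda>i. \<zeta> (t - int s + int i) \<omega>) (Suc s) x) (X x t \<omega>) powr p) \<partial>M)
          \<le> ennreal ((C * \<kappa> powr (real s / real m)) powr p)) \<and>
    (\<forall>x t. AE \<omega> in M. (\<lambda>s. fiter F (\<lambda>i. \<zeta> (t - int s + int i) \<omega>) (Suc s) x) \<longlonglongrightarrow> X x t \<omega>) \<and>
    (\<forall>x y t. AE \<omega> in M. X x t \<omega> = X y t \<omega>) \<and>
    (\<forall>x. stationary M \<zeta> \<longrightarrow> stationary M (\<lambda>t \<omega>. (X x t \<omega>, \<zeta> t \<omega>))) \<and>
    (\<forall>x. stationary M \<zeta> \<and> ergodic M \<zeta> \<longrightarrow> ergodic M (\<lambda>t \<omega>. (X x t \<omega>, \<zeta> t \<omega>))) \<and>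
    (\<forall>x Y. (\<forall>t. Y t \<in> Fl t \<rightarrow>\<^sub>M borel) \<and>
           (\<forall>t. AE \<omega> in M. Y t \<omega> = F (Y (t - 1) \<omega>) (\<zeta> t \<omega>)) \<and>
           (SUP j. \<integral>\<^sup>+ \<omega>. ennreal (dist (Y j \<omega>) x0 powr p) \<partial>M) < \<infinity>
         \<longrightarrow> (\<forall>t. AE \<omega> in M. Y t \<omega> = X x t \<omega>))"
proof -
  interpret random_iteration M Fl F \<zeta> p L \<kappa> m x0
    by (rule random_iteration.intro; fact)
  have backward: "fiter F (\<lambda>i. \<zeta> (t - int s + int i) \<omega>) (Suc s) x = backward x t s \<omega>" for x t s \<omega>
    by (simp add: backward_def flow_def)
  show ?thesis
    unfolding backward
  proof (intro exI[of _ X] conjI allI impI; (elim conjE)?)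
    show "(SUP t. \<integral>\<^sup>+ \<omega>. ennreal (dist (X x t \<omega>) x0 powr p) \<partial>M) < \<infinity>" for x
      by (rule X_moment_bounded)
    fix x and Y :: "int \<Rightarrow> 'w \<Rightarrow> 'a" and t
    assume "\<forall>t. Y t \<in> Fl t \<rightarrow>\<^sub>M borel" "\<forall>t. AE \<omega> in M. Y t \<omega> = F (Y (t - 1) \<omega>) (\<zeta> t \<omega>)"
      "(SUP j. \<integral>\<^sup>+ \<omega>. ennreal (dist (Y j \<omega>) x0 powr p) \<partial>M) < \<infinity>"
    then show "AE \<omega> in M. Y t \<omega> = X x t \<omega>" by (intro AE_solution_eq_X) auto
  qed (simp_all add: backward_X_rate AE_backward_tendsto_X AE_X_eq stationary_X ergodic_X)
qed

end
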